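(* Let $\Phi=(G,\varphi)$ be a complex unit gain graph and let $C_p^{\varphi}$ be a pendant cycle of $\Phi$ of order $p$, with $v$ the unique vertex of $C_p$ of degree $3$ in $G$. Let $F^{\varphi}=(F,\varphi)=\Phi-C_p^{\varphi}$ (delete all vertices of $C_p$) and $H^{\varphi}=(H,\varphi)=F^{\varphi}+v$ (the induced subgraph on $V(F)\cup\{v\}$). If $r(\Phi)=r(G)-2\theta(G)$, then (a) $C_p^{\varphi}$ is of Type A with $p\equiv 2\pmod 4$; (b) $r(H^{\varphi})=r(H)-2\theta(H)$ and $r(F^{\varphi})=r(F)-2\theta(F)$; (c) $r(\Phi)=p-2+r(F^{\varphi})$, $r(F^{\varphi})=r(H^{\varphi})$, $r(G)=p+r(H)$ and $r(F)=r(H)$.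
   Context: A complex unit gain graph $\Phi=(G,\varphi)$ consists of a finite simple graph $G$ with vertex set $\{v_1,\dots,v_n\}$ and a gain function $\varphi$ assigning to each oriented edge $e_{ij}$ ($v_iv_j\in E(G)$) a complex number of modulus $1$ with $\varphi(e_{ji})=\overline{\varphi(e_{ij})}$. $A(\Phi)$ is the Hermitian matrix with $(i,j)$ entry $\varphi(e_{ij})$ if $v_iv_j\in E(G)$ and $0$ otherwise; $r(\Phi)$ is its rank; $r(\cdot)$ of a simple graph is the rank of its $0$-$1$ adjacency matrix. Induced subgraphs of $\Phi$ carry the gains of $\Phi$. $\theta(G)=|E(G)|-|V(G)|+\omega(G)$, $\omega(G)$ the number of components. A pendant cycle of $G$ is an induced subgraph $C_p$ that is a cycle and has a unique vertex of degree $3$ in $G$ (its other vertices having degree $2$ in $G$). For a gain cycle with vertices $v_1,\dots,v_p$ in cyclic order, $\varphi(C_p)=\varphi(e_{12})\cdots\varphi(e_{p1})$; for $p$ even it is of Type A if $\varphi(C_p)=(-1)^{p/2}$. *)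

theory Defs
  imports Complex_Main
begin

text \<open>Matrices indexed by a finite vertex set S are functions
  'a => 'a => complex; only the entries on S x S matter.\<close>

definition simple_graph :: "'a set \<Rightarrow> ('a \<Rightarrow> 'a \<Rightarrow> bool) \<Rightarrow> bool" where
  "simple_graph V E \<longleftrightarrow> finite V \<and> (\<forall>x y. E x y \<longrightarrow> x \<in> V \<and> y \<in> V)
     \<and> (\<forall>x y. E x y \<longrightarrow> E y x) \<and> (\<forall>x. \<not> E x x)"

definition unit_gain :: "('a \<Rightarrow> 'a \<Rightarrow> bool) \<Rightarrow> ('a \<Rightarrow> 'a \<Rightarrow> complex) \<Rightarrow> bool" where
  "unit_gain E \<phi> \<longleftrightarrow> (\<forall>x y. E x y \<longrightarrow> cmod (\<phi> x y) = 1 \<and> \<phi> y x = cnj (\<phi> x y))"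

definition lin_indep_cols :: "'a set \<Rightarrow> ('a \<Rightarrow> 'a \<Rightarrow> complex) \<Rightarrow> 'a set \<Rightarrow> bool" where
  "lin_indep_cols S M J \<longleftrightarrow>
     (\<forall>c :: 'a \<Rightarrow> complex. (\<forall>i\<in>S. (\<Sum>j\<in>J. c j * M i j) = 0) \<longrightarrow> (\<forall>j\<in>J. c j = 0))"

definition mat_rank :: "'a set \<Rightarrow> ('a \<Rightarrow> 'a \<Rightarrow> complex) \<Rightarrow> nat" where
  "mat_rank S M = Max (card ` {J. J \<subseteq> S \<and> lin_indep_cols S M J})"

definition adj_mat :: "('a \<Rightarrow> 'a \<Rightarrow> bool) \<Rightarrow> 'a \<Rightarrow> 'a \<Rightarrow> complex" where
  "adj_mat E i j = (if E i j then 1 else 0)"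

definition gain_adj_mat :: "('a \<Rightarrow> 'a \<Rightarrow> bool) \<Rightarrow> ('a \<Rightarrow> 'a \<Rightarrow> complex) \<Rightarrow> 'a \<Rightarrow> 'a \<Rightarrow> complex" where
  "gain_adj_mat E \<phi> i j = (if E i j then \<phi> i j else 0)"

definition graph_rank :: "'a set \<Rightarrow> ('a \<Rightarrow> 'a \<Rightarrow> bool) \<Rightarrow> nat" where
  "graph_rank S E = mat_rank S (adj_mat E)"

definition gain_rank :: "'a set \<Rightarrow> ('a \<Rightarrow> 'a \<Rightarrow> bool) \<Rightarrow> ('a \<Rightarrow> 'a \<Rightarrow> complex) \<Rightarrow> nat" where
  "gain_rank S E \<phi> = mat_rank S (gain_adj_mat E \<phi>)"

definition induced_edges :: "'a set \<Rightarrow> ('a \<Rightarrow> 'a \<Rightarrow> bool) \<Rightarrow> 'a \<Rightarrow> 'a \<Rightarrow> bool" where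
  "induced_edges S E x y \<longleftrightarrow> x \<in> S \<and> y \<in> S \<and> E x y"

definition num_edges :: "'a set \<Rightarrow> ('a \<Rightarrow> 'a \<Rightarrow> bool) \<Rightarrow> nat" where
  "num_edges S E = card {{x, y} | x y. induced_edges S E x y}"

definition components :: "'a set \<Rightarrow> ('a \<Rightarrow> 'a \<Rightarrow> bool) \<Rightarrow> 'a set set" where
  "components S E = (\<lambda>v. {u \<in> S. (induced_edges S E)\<^sup>*\<^sup>* v u}) ` S"

definition num_components :: "'a set \<Rightarrow> ('a \<Rightarrow> 'a \<Rightarrow> bool) \<Rightarrow> nat" where
  "num_components S E = card (components S E)"

definition theta :: "'a set \<Rightarrow> ('a \<Rightarrow> 'a \<Rightarrow> bool) \<Rightarrow> int" where
  "theta S E = int (num_edges S E) - int (card S) + int (num_components S E)"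

definition degree :: "'a set \<Rightarrow> ('a \<Rightarrow> 'a \<Rightarrow> bool) \<Rightarrow> 'a \<Rightarrow> nat" where
  "degree V E x = card {y \<in> V. E x y}"

definition induced_cycle :: "'a set \<Rightarrow> ('a \<Rightarrow> 'a \<Rightarrow> bool) \<Rightarrow> 'a list \<Rightarrow> bool" where
  "induced_cycle V E cyc \<longleftrightarrow> distinct cyc \<and> length cyc \<ge> 3 \<and> set cyc \<subseteq> V
     \<and> (\<forall>i < length cyc. E (cyc ! i) (cyc ! ((i + 1) mod length cyc)))
     \<and> (\<forall>x \<in> set cyc. degree (set cyc) E x = 2)"

definition pendant_cycle :: "'a set \<Rightarrow> ('a \<Rightarrow> 'a \<Rightarrow> bool) \<Rightarrow> 'a list \<Rightarrow> 'a \<Rightarrow> bool" where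
  "pendant_cycle V E cyc v \<longleftrightarrow> induced_cycle V E cyc \<and> v \<in> set cyc
     \<and> degree V E v = 3 \<and> (\<forall>x \<in> set cyc - {v}. degree V E x = 2)"

definition cycle_gain :: "('a \<Rightarrow> 'a \<Rightarrow> complex) \<Rightarrow> 'a list \<Rightarrow> complex" where
  "cycle_gain \<phi> cyc = (\<Prod>i<length cyc. \<phi> (cyc ! i) (cyc ! ((i + 1) mod length cyc)))"

definition type_A :: "('a \<Rightarrow> 'a \<Rightarrow> complex) \<Rightarrow> 'a list \<Rightarrow> bool" where
  "type_A \<phi> cyc \<longleftrightarrow> even (length cyc) \<and> cycle_gain \<phi> cyc = (-1) ^ (length cyc div 2)"

end

theory Submission
  imports Defs
begin

text \<open>
  Contracting two consecutive vertices of the pendant cycle (a pivot on the path \<open>v, w 1, w 2, w 3\<close>)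
  lowers the rank by 2 and replaces the path by an edge \<open>v w 3\<close> whose gain is, up to sign, the
  product of the contracted gains. After \<open>(p - 1) div 2\<close> contractions only \<open>H\<close> is left,
  with either a loop at \<open>v\<close> (odd \<open>p\<close>) or one extra vertex joined to \<open>v\<close> (even \<open>p\<close>),
  and the weight of that loop or edge vanishes exactly when the cycle is of Type A.
  Comparing the gain graph with its underlying graph (all gains 1), the general bound
  \<open>r(G) \<le> r(\<Phi>) + 2 \<theta>(G)\<close> applied to \<open>F\<close>, \<open>H\<close> and \<open>F - u\<close>, together with
  \<open>\<theta>(F) < \<theta>(G)\<close> and \<open>\<theta>(H) \<le> \<theta>(F)\<close>, shows that \<open>r(\<Phi>) = r(G) - 2 \<theta>(G)\<close>
  rules out odd \<open>p\<close>, forces the gain cycle to be of Type A while the underlying cycle is not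
  (so \<open>p mod 4 = 2\<close>), and turns every intermediate inequality into an equality.
\<close>

definition submatrix_rank :: "'a set \<Rightarrow> 'a set \<Rightarrow> ('a \<Rightarrow> 'a \<Rightarrow> complex) \<Rightarrow> nat" where
  "submatrix_rank R C M = Max (card ` {J. J \<subseteq> C \<and> lin_indep_cols R M J})"

lemma mat_rank_eq_submatrix_rank: "mat_rank S M = submatrix_rank S S M"
  by (simp add: mat_rank_def submatrix_rank_def)

lemma lin_indep_cols_empty: "lin_indep_cols R M {}"
  by (simp add: lin_indep_cols_def)

lemma finite_indep_col_cards: "finite C \<Longrightarrow> finite (card ` {J. J \<subseteq> C \<and> lin_indep_cols R M J})"
proof -
  assume "finite C"
  have "{J. J \<subseteq> C \<and> lin_indep_cols R M J} \<subseteq> Pow C" by blast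
  then have "finite {J. J \<subseteq> C \<and> lin_indep_cols R M J}"
    using finite_subset finite_Pow_iff \<open>finite C\<close> by blast
  then show ?thesis by (rule finite_imageI)
qed

lemma card_le_submatrix_rank:
  assumes "finite C" "J \<subseteq> C" "lin_indep_cols R M J"
  shows "card J \<le> submatrix_rank R C M"
proof -
  have "card J \<in> card ` {J. J \<subseteq> C \<and> lin_indep_cols R M J}" using assms(2,3) by blast
  then show ?thesis unfolding submatrix_rank_def by (rule Max_ge[OF finite_indep_col_cards[OF assms(1)]])
qed

lemma submatrix_rank_witness:
  assumes "finite C"
  obtains J where "J \<subseteq> C" "lin_indep_cols R M J" "card J = submatrix_rank R C M"
proof -
  have e: "{} \<in> {J. J \<subseteq> C \<and> lin_indep_cols R M J}" by (simp add: lin_indep_cols_empty)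
  have ne: "card ` {J. J \<subseteq> C \<and> lin_indep_cols R M J} \<noteq> {}"
    using e by (simp only: image_is_empty) (rule notI, simp)
  have "submatrix_rank R C M \<in> card ` {J. J \<subseteq> C \<and> lin_indep_cols R M J}"
    unfolding submatrix_rank_def using Max_in[OF finite_indep_col_cards[OF assms] ne] .
  then obtain J where "J \<in> {J. J \<subseteq> C \<and> lin_indep_cols R M J}" "submatrix_rank R C M = card J"
    by (rule imageE)
  then have "J \<subseteq> C" "lin_indep_cols R M J" "card J = submatrix_rank R C M" by simp_all
  then show ?thesis by (rule that)
qed

lemma submatrix_rank_le_card: "finite C \<Longrightarrow> submatrix_rank R C M \<le> card C"
proof -
  assume "finite C"
  then obtain J where J: "J \<subseteq> C" "lin_indep_cols R M J" "card J = submatrix_rank R C M"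
    by (rule submatrix_rank_witness)
  then show ?thesis using card_mono[OF \<open>finite C\<close> J(1)] J(3) by simp
qed

lemma lin_indep_cols_mono_rows: "R \<subseteq> R' \<Longrightarrow> lin_indep_cols R M J \<Longrightarrow> lin_indep_cols R' M J"
  unfolding lin_indep_cols_def
proof (intro allI impI)
  fix c :: "'a \<Rightarrow> complex"
  assume a: "R \<subseteq> R'" "\<forall>c. (\<forall>i\<in>R. (\<Sum>j\<in>J. c j * M i j) = 0) \<longrightarrow> (\<forall>j\<in>J. c j = 0)"
    "\<forall>i\<in>R'. (\<Sum>j\<in>J. c j * M i j) = 0"
  then have "\<forall>i\<in>R. (\<Sum>j\<in>J. c j * M i j) = 0" by (simp add: subset_iff)
  then show "\<forall>j\<in>J. c j = 0" using a(2) by simp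
qed

lemma lin_indep_cols_subset:
  assumes "finite J" "J' \<subseteq> J" "lin_indep_cols R M J"
  shows "lin_indep_cols R M J'"
  unfolding lin_indep_cols_def
proof (intro allI impI ballI)
  fix c :: "'a \<Rightarrow> complex" and j
  assume h: "\<forall>i\<in>R. (\<Sum>j\<in>J'. c j * M i j) = 0" and j: "j \<in> J'"
  define d where "d = (\<lambda>j. if j \<in> J' then c j else 0)"
  have "\<forall>i\<in>R. (\<Sum>j\<in>J. d j * M i j) = 0"
  proof
    fix i assume "i \<in> R"
    have "(\<Sum>j\<in>J. d j * M i j) = (\<Sum>j\<in>J'. d j * M i j)"
      using assms(1,2) by (intro sum.mono_neutral_right) (auto simp: d_def)
    also have "\<dots> = (\<Sum>j\<in>J'. c j * M i j)" by (simp add: d_def)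
    finally show "(\<Sum>j\<in>J. d j * M i j) = 0" using h \<open>i \<in> R\<close> by simp
  qed
  then have "d j = 0" using assms(3) j assms(2) unfolding lin_indep_cols_def by blast
  then show "c j = 0" using j by (simp add: d_def)
qed

lemma lin_indep_cols_cong:
  assumes "\<forall>i\<in>R. \<forall>j\<in>J. M i j = M' i j"
  shows "lin_indep_cols R M J = lin_indep_cols R M' J"
proof -
  have "\<And>c i. i \<in> R \<Longrightarrow> (\<Sum>j\<in>J. c j * M i j) = (\<Sum>j\<in>J. c j * M' i j)"
    using assms by (intro sum.cong) auto
  then show ?thesis unfolding lin_indep_cols_def by auto
qed

lemma submatrix_rank_cong:
  assumes "\<forall>i\<in>R. \<forall>j\<in>C. M i j = M' i j"
  shows "submatrix_rank R C M = submatrix_rank R C M'"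
proof -
  have "{J. J \<subseteq> C \<and> lin_indep_cols R M J} = {J. J \<subseteq> C \<and> lin_indep_cols R M' J}"
    using lin_indep_cols_cong[of R _ M M'] assms by blast
  then show ?thesis unfolding submatrix_rank_def by simp
qed

lemma submatrix_rank_mono_rows:
  assumes "finite C" "R \<subseteq> R'"
  shows "submatrix_rank R C M \<le> submatrix_rank R' C M"
proof -
  obtain J where "J \<subseteq> C" "lin_indep_cols R M J" "card J = submatrix_rank R C M"
    by (rule submatrix_rank_witness[OF assms(1)])
  then have "lin_indep_cols R' M J" using lin_indep_cols_mono_rows[OF assms(2)] by blast
  then have "card J \<le> submatrix_rank R' C M" using card_le_submatrix_rank[OF assms(1) \<open>J \<subseteq> C\<close>] by blast
  then show ?thesis using \<open>card J = submatrix_rank R C M\<close> by simp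
qed

lemma submatrix_rank_mono_cols:
  assumes "finite C'" "C \<subseteq> C'"
  shows "submatrix_rank R C M \<le> submatrix_rank R C' M"
proof -
  have "finite C" using assms finite_subset by blast
  obtain J where "J \<subseteq> C" "lin_indep_cols R M J" "card J = submatrix_rank R C M"
    by (rule submatrix_rank_witness[OF \<open>finite C\<close>])
  then have "card J \<le> submatrix_rank R C' M" using card_le_submatrix_rank[OF assms(1)] assms(2) by blast
  then show ?thesis using \<open>card J = submatrix_rank R C M\<close> by simp
qed

lemma submatrix_rank_delete_col:
  assumes "finite C"
  shows "submatrix_rank R C M \<le> submatrix_rank R (C - {y}) M + 1"
proof -
  obtain J where J: "J \<subseteq> C" "lin_indep_cols R M J" "card J = submatrix_rank R C M"
    by (rule submatrix_rank_witness[OF assms(1)])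
  have fJ: "finite J" using J(1) assms finite_subset by blast
  have "lin_indep_cols R M (J - {y})" using lin_indep_cols_subset[OF fJ _ J(2)] by blast
  then have "card (J - {y}) \<le> submatrix_rank R (C - {y}) M"
    using J(1) assms by (intro card_le_submatrix_rank) auto
  moreover have "card J \<le> card (J - {y}) + 1"
    using fJ card_Diff_singleton_if[of J y] card_0_eq[of J] by (cases "y \<in> J") auto
  ultimately show ?thesis using J(3) by linarith
qed

lemma sum_zeroed_at_eq_sum_remove:
  assumes "finite J" "j0 \<in> J"
  shows "(\<Sum>j\<in>J. (if j = j0 then 0 else d j) * (N j :: complex)) = (\<Sum>j\<in>J - {j0}. d j * N j)"
proof -
  have "(\<Sum>j\<in>J. (if j = j0 then 0 else d j) * N j)
      = (if j0 = j0 then 0 else d j0) * N j0 + (\<Sum>j\<in>J - {j0}. (if j = j0 then 0 else d j) * N j)"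
    using sum.remove[OF assms] by blast
  also have "\<dots> = (\<Sum>j\<in>J - {j0}. d j * N j)"
  proof -
    have "(\<Sum>j\<in>J - {j0}. (if j = j0 then 0 else d j) * N j) = (\<Sum>j\<in>J - {j0}. d j * N j)"
      by (rule sum.cong) auto
    then show ?thesis by simp
  qed
  finally show ?thesis .
qed

lemma lin_indep_cols_delete_row:
  assumes "finite J" "lin_indep_cols R M J"
  shows "\<exists>J'. J' \<subseteq> J \<and> lin_indep_cols (R - {x}) M J' \<and> card J \<le> card J' + 1"
proof (cases "lin_indep_cols (R - {x}) M J")
  case True
  then show ?thesis by (intro exI[of _ J]) simp
next
  case False
  then obtain c j0 where c: "\<forall>i\<in>R - {x}. (\<Sum>j\<in>J. c j * M i j) = 0" "j0 \<in> J" "c j0 \<noteq> 0"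
    unfolding lin_indep_cols_def by auto
  define \<alpha> where "\<alpha> = (\<Sum>j\<in>J. c j * M x j)"
  have a0: "\<alpha> \<noteq> 0"
  proof
    assume "\<alpha> = 0"
    then have "\<forall>i\<in>R. (\<Sum>j\<in>J. c j * M i j) = 0" using c(1) \<alpha>_def by auto
    then show False using assms(2) c(2,3) unfolding lin_indep_cols_def by auto
  qed
  define J' where "J' = J - {j0}"
  have ind: "lin_indep_cols (R - {x}) M J'"
    unfolding lin_indep_cols_def
  proof (intro allI impI ballI)
    fix d :: "'a \<Rightarrow> complex" and j
    assume hd: "\<forall>i\<in>R - {x}. (\<Sum>j\<in>J'. d j * M i j) = 0" and j: "j \<in> J'"
    define \<beta> where "\<beta> = (\<Sum>j\<in>J'. d j * M x j)"
    define e where "e = (\<lambda>j. (if j = j0 then 0 else d j) - (\<beta> / \<alpha>) * c j)"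
    have se: "(\<Sum>j\<in>J. e j * M i j) = (\<Sum>j\<in>J'. d j * M i j) - (\<beta> / \<alpha>) * (\<Sum>j\<in>J. c j * M i j)" for i
    proof -
      have "(\<Sum>j\<in>J. e j * M i j) = (\<Sum>j\<in>J. (if j = j0 then 0 else d j) * M i j)
          - (\<Sum>j\<in>J. (\<beta> / \<alpha>) * c j * M i j)"
        unfolding e_def by (simp add: algebra_simps sum_subtractf)
      also have "\<dots> = (\<Sum>j\<in>J'. d j * M i j) - (\<beta> / \<alpha>) * (\<Sum>j\<in>J. c j * M i j)"
        using sum_zeroed_at_eq_sum_remove[OF assms(1) c(2), of d "\<lambda>j. M i j"]
        by (simp add: J'_def sum_distrib_left mult.assoc)
      finally show ?thesis .
    qed
    have "\<forall>i\<in>R. (\<Sum>j\<in>J. e j * M i j) = 0"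
    proof
      fix i assume "i \<in> R"
      show "(\<Sum>j\<in>J. e j * M i j) = 0"
      proof (cases "i = x")
        case True
        then show ?thesis using se[of x] a0 by (simp add: \<beta>_def \<alpha>_def[symmetric])
      next
        case False
        then show ?thesis using se[of i] hd c(1) \<open>i \<in> R\<close> by simp
      qed
    qed
    then have e0: "\<forall>j\<in>J. e j = 0" using assms(2) unfolding lin_indep_cols_def by blast
    then have "e j0 = 0" using c(2) by blast
    then have "\<beta> = 0" using c(3) a0 by (simp add: e_def)
    moreover have "j \<in> J" "j \<noteq> j0" using j by (auto simp: J'_def)
    moreover have "e j = 0" using e0 \<open>j \<in> J\<close> by blast
    ultimately show "d j = 0" by (simp add: e_def)
  qed
  have "card J = card J' + 1"
    using assms(1) c(2) by (simp add: J'_def card_Diff_singleton)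
      (metis Suc_pred card_gt_0_iff empty_iff)
  then show ?thesis using ind by (intro exI[of _ J']) (auto simp: J'_def)
qed

lemma submatrix_rank_delete_row:
  assumes "finite C"
  shows "submatrix_rank R C M \<le> submatrix_rank (R - {x}) C M + 1"
proof -
  obtain J where J: "J \<subseteq> C" "lin_indep_cols R M J" "card J = submatrix_rank R C M"
    by (rule submatrix_rank_witness[OF assms(1)])
  have fJ: "finite J" using J(1) assms finite_subset by blast
  obtain J' where J': "J' \<subseteq> J" "lin_indep_cols (R - {x}) M J'" "card J \<le> card J' + 1"
    using lin_indep_cols_delete_row[OF fJ J(2), of x] by blast
  have "card J' \<le> submatrix_rank (R - {x}) C M" using J'(1,2) J(1) by (intro card_le_submatrix_rank[OF assms]) auto
  then show ?thesis using J(3) J'(3) by linarith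
qed

lemma submatrix_rank_cong_indep:
  assumes "\<And>J. J \<subseteq> C \<Longrightarrow> lin_indep_cols R M J = lin_indep_cols R' M' J"
  shows "submatrix_rank R C M = submatrix_rank R' C M'"
proof -
  have "{J. J \<subseteq> C \<and> lin_indep_cols R M J} = {J. J \<subseteq> C \<and> lin_indep_cols R' M' J}"
    using assms by auto
  then show ?thesis unfolding submatrix_rank_def by simp
qed

lemma submatrix_rank_zero_row:
  assumes "\<forall>j\<in>C. M x j = 0"
  shows "submatrix_rank R C M = submatrix_rank (R - {x}) C M"
proof (rule submatrix_rank_cong_indep)
  fix J assume J: "J \<subseteq> C"
  have "\<And>c. (\<Sum>j\<in>J. c j * M x j) = 0" using assms J by (intro sum.neutral) auto
  then show "lin_indep_cols R M J = lin_indep_cols (R - {x}) M J"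
    unfolding lin_indep_cols_def by (metis Diff_iff singletonD)
qed

lemma submatrix_rank_zero_col:
  assumes "finite C" "\<forall>i\<in>R. M i y = 0"
  shows "submatrix_rank R C M = submatrix_rank R (C - {y}) M"
proof (rule antisym)
  obtain J where J: "J \<subseteq> C" "lin_indep_cols R M J" "card J = submatrix_rank R C M"
    by (rule submatrix_rank_witness[OF assms(1)])
  have fJ: "finite J" using J(1) assms finite_subset by blast
  have "y \<notin> J"
  proof
    assume y: "y \<in> J"
    define c where "c = (\<lambda>j. if j = y then (1::complex) else 0)"
    have "\<forall>i\<in>R. (\<Sum>j\<in>J. c j * M i j) = 0"
    proof
      fix i assume "i \<in> R"
      have "(\<Sum>j\<in>J. c j * M i j) = (\<Sum>j\<in>J. if j = y then M i j else 0)"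
        by (intro sum.cong) (auto simp: c_def)
      also have "\<dots> = M i y" using y fJ by simp
      finally show "(\<Sum>j\<in>J. c j * M i j) = 0" using assms(2) \<open>i \<in> R\<close> by simp
    qed
    then have "c y = 0" using J(2) y unfolding lin_indep_cols_def by blast
    then show False by (simp add: c_def)
  qed
  then have "card J \<le> submatrix_rank R (C - {y}) M"
    using J assms(1) by (intro card_le_submatrix_rank) auto
  then show "submatrix_rank R C M \<le> submatrix_rank R (C - {y}) M" using J(3) by simp
next
  show "submatrix_rank R (C - {y}) M \<le> submatrix_rank R C M" using assms(1) by (intro submatrix_rank_mono_cols) auto
qed

lemma submatrix_rank_add_row_multiple:
  assumes "k \<in> R" "i \<in> R" "k \<noteq> i"
  shows "submatrix_rank R C (M(k := (\<lambda>j. M k j + lam * M i j))) = submatrix_rank R C M"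
proof (rule submatrix_rank_cong_indep)
  fix J :: "'a set"
  let ?M' = "M(k := (\<lambda>j. M k j + lam * M i j))"
  have s: "(\<Sum>j\<in>J. c j * ?M' k j) = (\<Sum>j\<in>J. c j * M k j) + lam * (\<Sum>j\<in>J. c j * M i j)" for c
    by (simp add: algebra_simps sum.distrib sum_distrib_left)
  have o: "l \<noteq> k \<Longrightarrow> (\<Sum>j\<in>J. c j * ?M' l j) = (\<Sum>j\<in>J. c j * M l j)" for c l by simp
  have "(\<forall>l\<in>R. (\<Sum>j\<in>J. c j * ?M' l j) = 0) \<longleftrightarrow> (\<forall>l\<in>R. (\<Sum>j\<in>J. c j * M l j) = 0)" for c
  proof
    assume h: "\<forall>l\<in>R. (\<Sum>j\<in>J. c j * ?M' l j) = 0"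
    have hi: "(\<Sum>j\<in>J. c j * M i j) = 0" using h assms o[of i c] by auto
    show "\<forall>l\<in>R. (\<Sum>j\<in>J. c j * M l j) = 0"
    proof
      fix l assume "l \<in> R"
      show "(\<Sum>j\<in>J. c j * M l j) = 0"
      proof (cases "l = k")
        case True
        have "(\<Sum>j\<in>J. c j * ?M' k j) = 0" using h assms(1) by blast
        then show ?thesis using True s[of c] hi by simp
      next
        case False
        have "(\<Sum>j\<in>J. c j * ?M' l j) = 0" using h \<open>l \<in> R\<close> by blast
        then show ?thesis using o[OF False, of c] by simp
      qed
    qed
  next
    assume h: "\<forall>l\<in>R. (\<Sum>j\<in>J. c j * M l j) = 0"
    show "\<forall>l\<in>R. (\<Sum>j\<in>J. c j * ?M' l j) = 0"
    proof
      fix l assume "l \<in> R"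
      show "(\<Sum>j\<in>J. c j * ?M' l j) = 0"
      proof (cases "l = k")
        case True
        have "(\<Sum>j\<in>J. c j * M k j) = 0" "(\<Sum>j\<in>J. c j * M i j) = 0" using h assms(1,2) by blast+
        then show ?thesis using True s[of c] by simp
      next
        case False then show ?thesis using h \<open>l \<in> R\<close> o[of l c] by simp
      qed
    qed
  qed
  then show "lin_indep_cols R ?M' J = lin_indep_cols R M J"
    unfolding lin_indep_cols_def by simp
qed

lemma submatrix_rank_pivot_row_le:
  assumes "finite C" "x \<in> R" "y \<in> C" "M x y \<noteq> 0" "\<forall>j\<in>C. j \<noteq> y \<longrightarrow> M x j = 0"
  shows "submatrix_rank R C M \<le> submatrix_rank (R - {x}) (C - {y}) M + 1"
proof -
  obtain J where J: "J \<subseteq> C" "lin_indep_cols R M J" "card J = submatrix_rank R C M"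
    by (rule submatrix_rank_witness[OF assms(1)])
  have fJ: "finite J" using J(1) assms finite_subset by blast
  show "submatrix_rank R C M \<le> submatrix_rank (R - {x}) (C - {y}) M + 1"
  proof (cases "y \<in> J")
    case True
    have "lin_indep_cols (R - {x}) M (J - {y})"
      unfolding lin_indep_cols_def
    proof (intro allI impI ballI)
      fix c :: "'a \<Rightarrow> complex" and j
      assume h: "\<forall>i\<in>R - {x}. (\<Sum>j\<in>J - {y}. c j * M i j) = 0" and j: "j \<in> J - {y}"
      define c' where "c' = (\<lambda>j. if j = y then 0 else c j)"
      have sc: "(\<Sum>j\<in>J. c' j * M i j) = (\<Sum>j\<in>J - {y}. c j * M i j)" for i
        unfolding c'_def by (rule sum_zeroed_at_eq_sum_remove[OF fJ True])
      have "(\<Sum>j\<in>J - {y}. c j * M x j) = 0"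
        using assms(5) J(1) by (intro sum.neutral) auto
      then have "\<forall>i\<in>R. (\<Sum>j\<in>J. c' j * M i j) = 0" using h sc by auto
      then have "c' j = 0" using J(2) j unfolding lin_indep_cols_def by blast
      then show "c j = 0" using j by (simp add: c'_def)
    qed
    then have "card (J - {y}) \<le> submatrix_rank (R - {x}) (C - {y}) M"
      using J(1) assms(1) by (intro card_le_submatrix_rank) auto
    then show ?thesis using J(3) card.remove[OF fJ True] by linarith
  next
    case False
    have "lin_indep_cols (R - {x}) M J"
      unfolding lin_indep_cols_def
    proof (intro allI impI)
      fix c :: "'a \<Rightarrow> complex"
      assume h: "\<forall>i\<in>R - {x}. (\<Sum>j\<in>J. c j * M i j) = 0"
      have "(\<Sum>j\<in>J. c j * M x j) = 0"
        using assms(5) J(1) False by (intro sum.neutral) auto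
      then have "\<forall>i\<in>R. (\<Sum>j\<in>J. c j * M i j) = 0" using h by auto
      then show "\<forall>j\<in>J. c j = 0" using J(2) unfolding lin_indep_cols_def by blast
    qed
    then have "card J \<le> submatrix_rank (R - {x}) (C - {y}) M"
      using J(1) False assms(1) by (intro card_le_submatrix_rank) auto
    then show ?thesis using J(3) by linarith
  qed
qed

lemma submatrix_rank_pivot_row_ge:
  assumes "finite C" "x \<in> R" "y \<in> C" "M x y \<noteq> 0" "\<forall>j\<in>C. j \<noteq> y \<longrightarrow> M x j = 0"
  shows "submatrix_rank (R - {x}) (C - {y}) M + 1 \<le> submatrix_rank R C M"
proof -
  obtain J where J: "J \<subseteq> C - {y}" "lin_indep_cols (R - {x}) M J" "card J = submatrix_rank (R - {x}) (C - {y}) M"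
    by (rule submatrix_rank_witness[OF finite_Diff[OF assms(1)]])
  have fJ: "finite J" using J(1) assms finite_subset by blast
  have yJ: "y \<notin> J" using J(1) by blast
  have "lin_indep_cols R M (insert y J)"
    unfolding lin_indep_cols_def
  proof (intro allI impI)
    fix c :: "'a \<Rightarrow> complex"
    assume h: "\<forall>i\<in>R. (\<Sum>j\<in>insert y J. c j * M i j) = 0"
    have z: "(\<Sum>j\<in>J. c j * M x j) = 0" using assms(5) J(1) by (intro sum.neutral) auto
    have "c y * M x y = 0" using h assms(2) z fJ yJ by auto
    then have cy: "c y = 0" using assms(4) by simp
    have "\<forall>i\<in>R - {x}. (\<Sum>j\<in>J. c j * M i j) = 0"
      using h cy fJ yJ by auto
    then have "\<forall>j\<in>J. c j = 0" using J(2) unfolding lin_indep_cols_def by blast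
    then show "\<forall>j\<in>insert y J. c j = 0" using cy by blast
  qed
  then have "card (insert y J) \<le> submatrix_rank R C M"
    using J(1) assms(1,3) by (intro card_le_submatrix_rank) auto
  then show "submatrix_rank (R - {x}) (C - {y}) M + 1 \<le> submatrix_rank R C M"
    using J(3) card.insert[OF fJ yJ] by linarith
qed

lemma submatrix_rank_pivot_row:
  assumes "finite C" "x \<in> R" "y \<in> C" "M x y \<noteq> 0" "\<forall>j\<in>C. j \<noteq> y \<longrightarrow> M x j = 0"
  shows "submatrix_rank R C M = submatrix_rank (R - {x}) (C - {y}) M + 1"
  using submatrix_rank_pivot_row_le[of C x R y M] submatrix_rank_pivot_row_ge[of C x R y M] assms by simp

lemma submatrix_rank_pivot_col_le:
  assumes "finite C" "x \<in> R" "y \<in> C" "M x y \<noteq> 0" "\<forall>i\<in>R. i \<noteq> x \<longrightarrow> M i y = 0"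
  shows "submatrix_rank R C M \<le> submatrix_rank (R - {x}) (C - {y}) M + 1"
proof -
  obtain J where J: "J \<subseteq> C" "lin_indep_cols R M J" "card J = submatrix_rank R C M"
    by (rule submatrix_rank_witness[OF assms(1)])
  have fJ: "finite J" using J(1) assms finite_subset by blast
  show "submatrix_rank R C M \<le> submatrix_rank (R - {x}) (C - {y}) M + 1"
  proof (cases "y \<in> J")
    case True
    have "lin_indep_cols (R - {x}) M (J - {y})"
      unfolding lin_indep_cols_def
    proof (intro allI impI ballI)
      fix c :: "'a \<Rightarrow> complex" and j
      assume h: "\<forall>i\<in>R - {x}. (\<Sum>j\<in>J - {y}. c j * M i j) = 0" and j: "j \<in> J - {y}"
      define \<alpha> where "\<alpha> = (\<Sum>j\<in>J - {y}. c j * M x j)"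
      define c' where "c' = c(y := - \<alpha> / M x y)"
      have sc: "(\<Sum>j\<in>J. c' j * M i j) = c' y * M i y + (\<Sum>j\<in>J - {y}. c j * M i j)" for i
      proof -
        have "(\<Sum>j\<in>J. c' j * M i j) = c' y * M i y + (\<Sum>j\<in>J - {y}. c' j * M i j)"
          using sum.remove[OF fJ True] by blast
        also have "(\<Sum>j\<in>J - {y}. c' j * M i j) = (\<Sum>j\<in>J - {y}. c j * M i j)"
          by (rule sum.cong) (auto simp: c'_def)
        finally show ?thesis .
      qed
      have "\<forall>i\<in>R. (\<Sum>j\<in>J. c' j * M i j) = 0"
      proof
        fix i assume i: "i \<in> R"
        show "(\<Sum>j\<in>J. c' j * M i j) = 0"
        proof (cases "i = x")
          case True
          then show ?thesis using sc[of x] assms(4) by (simp add: c'_def \<alpha>_def)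
        next
          case False
          then show ?thesis using sc[of i] assms(5) h i by simp
        qed
      qed
      then have "c' j = 0" using J(2) j unfolding lin_indep_cols_def by blast
      then show "c j = 0" using j by (simp add: c'_def)
    qed
    then have "card (J - {y}) \<le> submatrix_rank (R - {x}) (C - {y}) M"
      using J(1) assms(1) by (intro card_le_submatrix_rank) auto
    then show ?thesis using J(3) card.remove[OF fJ True] by linarith
  next
    case False
    obtain J' where J': "J' \<subseteq> J" "lin_indep_cols (R - {x}) M J'" "card J \<le> card J' + 1"
      using lin_indep_cols_delete_row[OF fJ J(2), of x] by blast
    have "card J' \<le> submatrix_rank (R - {x}) (C - {y}) M"
      using J'(1,2) J(1) False assms(1) by (intro card_le_submatrix_rank) auto
    then show ?thesis using J(3) J'(3) by linarith
  qed
qed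

lemma submatrix_rank_pivot_col_ge:
  assumes "finite C" "x \<in> R" "y \<in> C" "M x y \<noteq> 0" "\<forall>i\<in>R. i \<noteq> x \<longrightarrow> M i y = 0"
  shows "submatrix_rank (R - {x}) (C - {y}) M + 1 \<le> submatrix_rank R C M"
proof -
  obtain J where J: "J \<subseteq> C - {y}" "lin_indep_cols (R - {x}) M J" "card J = submatrix_rank (R - {x}) (C - {y}) M"
    by (rule submatrix_rank_witness[OF finite_Diff[OF assms(1)]])
  have fJ: "finite J" using J(1) assms finite_subset by blast
  have yJ: "y \<notin> J" using J(1) by blast
  have "lin_indep_cols R M (insert y J)"
    unfolding lin_indep_cols_def
  proof (intro allI impI)
    fix c :: "'a \<Rightarrow> complex"
    assume h: "\<forall>i\<in>R. (\<Sum>j\<in>insert y J. c j * M i j) = 0"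
    have "\<forall>i\<in>R - {x}. (\<Sum>j\<in>J. c j * M i j) = 0"
    proof
      fix i assume i: "i \<in> R - {x}"
      then have "c y * M i y + (\<Sum>j\<in>J. c j * M i j) = 0"
        using h fJ yJ by auto
      moreover have "M i y = 0" using assms(5) i by blast
      ultimately show "(\<Sum>j\<in>J. c j * M i j) = 0" by simp
    qed
    then have cJ: "\<forall>j\<in>J. c j = 0" using J(2) unfolding lin_indep_cols_def by blast
    then have "(\<Sum>j\<in>J. c j * M x j) = 0" by simp
    then have "c y * M x y = 0" using h assms(2) fJ yJ by auto
    then have cy: "c y = 0" using assms(4) by simp
    then show "\<forall>j\<in>insert y J. c j = 0" using cJ by blast
  qed
  then have "card (insert y J) \<le> submatrix_rank R C M"
    using J(1) assms(1,3) by (intro card_le_submatrix_rank) auto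
  then show "submatrix_rank (R - {x}) (C - {y}) M + 1 \<le> submatrix_rank R C M"
    using J(3) card.insert[OF fJ yJ] by linarith
qed

lemma submatrix_rank_pivot_col:
  assumes "finite C" "x \<in> R" "y \<in> C" "M x y \<noteq> 0" "\<forall>i\<in>R. i \<noteq> x \<longrightarrow> M i y = 0"
  shows "submatrix_rank R C M = submatrix_rank (R - {x}) (C - {y}) M + 1"
  using submatrix_rank_pivot_col_le[of C x R y M] submatrix_rank_pivot_col_ge[of C x R y M] assms by simp

lemma submatrix_rank_change_col:
  assumes "finite C" "\<forall>i\<in>R. \<forall>j\<in>C - {u}. M i j = M' i j"
  shows "submatrix_rank R C M \<le> submatrix_rank R C M' + 1"
proof -
  have "submatrix_rank R C M \<le> submatrix_rank R (C - {u}) M + 1" by (rule submatrix_rank_delete_col[OF assms(1)])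
  also have "submatrix_rank R (C - {u}) M = submatrix_rank R (C - {u}) M'" by (rule submatrix_rank_cong) (use assms(2) in blast)
  also have "submatrix_rank R (C - {u}) M' \<le> submatrix_rank R C M'" using assms(1) by (intro submatrix_rank_mono_cols) auto
  finally show ?thesis by simp
qed

lemma principal_rank_delete_vertex:
  assumes "finite S"
  shows "submatrix_rank S S M \<le> submatrix_rank (S - {x}) (S - {x}) M + 2"
    and "submatrix_rank (S - {x}) (S - {x}) M \<le> submatrix_rank S S M"
proof -
  have "submatrix_rank S S M \<le> submatrix_rank S (S - {x}) M + 1" by (rule submatrix_rank_delete_col[OF assms])
  also have "\<dots> \<le> submatrix_rank (S - {x}) (S - {x}) M + 1 + 1"
    using submatrix_rank_delete_row[of "S - {x}" S M x] assms by simp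
  finally show "submatrix_rank S S M \<le> submatrix_rank (S - {x}) (S - {x}) M + 2" by simp
  have "submatrix_rank (S - {x}) (S - {x}) M \<le> submatrix_rank S (S - {x}) M"
    using assms by (intro submatrix_rank_mono_rows) auto
  also have "\<dots> \<le> submatrix_rank S S M" using assms by (intro submatrix_rank_mono_cols) auto
  finally show "submatrix_rank (S - {x}) (S - {x}) M \<le> submatrix_rank S S M" .
qed

lemma principal_rank_mono:
  assumes "finite S" "T \<subseteq> S"
  shows "submatrix_rank T T M \<le> submatrix_rank S S M"
proof -
  have "submatrix_rank T T M \<le> submatrix_rank S T M" using assms finite_subset by (intro submatrix_rank_mono_rows) auto
  also have "\<dots> \<le> submatrix_rank S S M" using assms by (intro submatrix_rank_mono_cols) auto
  finally show ?thesis .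
qed

lemma hermitian_lin_indep_cols_insert:
  assumes fJ: "finite J" and J: "J \<subseteq> F - {u}" "lin_indep_cols F A J" and u: "u \<in> F"
    and herm: "\<forall>i\<in>F. \<forall>j\<in>F. A i j = cnj (A j i)"
    and e: "\<forall>i\<in>F - {u}. (\<Sum>j\<in>J. e j * A i j) = 0"
    and b0: "(\<Sum>j\<in>J. e j * A u j) \<noteq> 0"
  shows "lin_indep_cols F A (insert u J)"
  unfolding lin_indep_cols_def
proof (intro allI impI)
  fix c :: "'a \<Rightarrow> complex"
  assume h: "\<forall>i\<in>F. (\<Sum>j\<in>insert u J. c j * A i j) = 0"
  let ?\<beta> = "\<Sum>j\<in>J. e j * A u j"
  have JF: "J \<subseteq> F" and uJ: "u \<notin> J" using J(1) by auto
  have hs: "\<forall>i\<in>F. c u * A i u + (\<Sum>j\<in>J. c j * A i j) = 0"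
    using h fJ uJ by auto
  have cu: "c u = 0"
  proof (rule ccontr)
    assume cu: "c u \<noteq> 0"
    have Aju: "A u j = - cnj (\<Sum>k\<in>J. c k * A j k) / cnj (c u)" if "j \<in> J" for j
    proof -
      have "c u * A j u + (\<Sum>k\<in>J. c k * A j k) = 0" using hs that JF by blast
      then have ce: "c u * A j u = - (\<Sum>k\<in>J. c k * A j k)" by (simp add: eq_neg_iff_add_eq_0)
      have "A j u = (c u * A j u) / c u" using cu by simp
      also have "\<dots> = - (\<Sum>k\<in>J. c k * A j k) / c u" by (simp only: ce)
      finally have "A j u = - (\<Sum>k\<in>J. c k * A j k) / c u" .
      moreover have "A u j = cnj (A j u)" using herm that JF u by blast
      ultimately show ?thesis by simp
    qed
    have "?\<beta> = (\<Sum>j\<in>J. e j * (- cnj (\<Sum>k\<in>J. c k * A j k) / cnj (c u)))"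
      by (rule sum.cong) (auto simp: Aju)
    also have "\<dots> = - (\<Sum>j\<in>J. \<Sum>k\<in>J. e j * cnj (c k) * cnj (A j k)) / cnj (c u)"
      by (simp add: sum_distrib_left sum_divide_distrib sum_negf mult.assoc)
    also have "(\<Sum>j\<in>J. \<Sum>k\<in>J. e j * cnj (c k) * cnj (A j k))
        = (\<Sum>j\<in>J. \<Sum>k\<in>J. cnj (c k) * (e j * A k j))"
    proof (intro sum.cong refl)
      fix j k assume jk: "j \<in> J" "k \<in> J"
      then have "A k j = cnj (A j k)" using herm JF by blast
      then show "e j * cnj (c k) * cnj (A j k) = cnj (c k) * (e j * A k j)" by simp
    qed
    also have "\<dots> = (\<Sum>k\<in>J. \<Sum>j\<in>J. cnj (c k) * (e j * A k j))" by (rule sum.swap)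
    also have "\<dots> = (\<Sum>k\<in>J. cnj (c k) * (\<Sum>j\<in>J. e j * A k j))"
      by (simp add: sum_distrib_left)
    also have "\<dots> = 0" using e J(1) by (intro sum.neutral) auto
    finally show False using b0 by simp
  qed
  then have "\<forall>i\<in>F. (\<Sum>j\<in>J. c j * A i j) = 0" using hs by simp
  then have "\<forall>j\<in>J. c j = 0" using J(2) unfolding lin_indep_cols_def by blast
  then show "\<forall>j\<in>insert u J. c j = 0" using cu by blast
qed

lemma hermitian_rank_jump_change_diag:
  assumes fin: "finite F" "u \<in> F"
    and herm: "\<forall>i\<in>F. \<forall>j\<in>F. A i j = cnj (A j i)"
    and agree: "\<forall>i\<in>F. \<forall>j\<in>F. (i, j) \<noteq> (u, u) \<longrightarrow> A' i j = A i j"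
    and eq: "submatrix_rank F F A' = submatrix_rank (F - {u}) (F - {u}) A + 2"
  shows "submatrix_rank F F A = submatrix_rank (F - {u}) (F - {u}) A + 2"
proof -
  define R where "R = F - {u}"
  have fR: "finite R" using fin by (simp add: R_def)
  have "submatrix_rank F F A' \<le> submatrix_rank F R A' + 1" unfolding R_def by (rule submatrix_rank_delete_col[OF fin(1)])
  moreover have "submatrix_rank F R A' = submatrix_rank F R A"
    by (rule submatrix_rank_cong) (use agree in \<open>auto simp: R_def\<close>)
  ultimately have ge: "submatrix_rank F R A \<ge> submatrix_rank R R A + 1" using eq unfolding R_def by linarith
  obtain J where J: "J \<subseteq> R" "lin_indep_cols F A J" "card J = submatrix_rank F R A"
    by (rule submatrix_rank_witness[OF fR])
  have fJ: "finite J" using J(1) fR finite_subset by blast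
  have uJ: "u \<notin> J" using J(1) by (auto simp: R_def)
  have JF: "J \<subseteq> F" using J(1) by (auto simp: R_def)
  have "\<not> lin_indep_cols R A J"
  proof
    assume "lin_indep_cols R A J"
    then have "card J \<le> submatrix_rank R R A" using J(1) fR by (intro card_le_submatrix_rank) auto
    then show False using ge J(3) by linarith
  qed
  then obtain e j1 where e: "\<forall>i\<in>R. (\<Sum>j\<in>J. e j * A i j) = 0" "j1 \<in> J" "e j1 \<noteq> 0"
    unfolding lin_indep_cols_def by auto
  define \<beta> where "\<beta> = (\<Sum>j\<in>J. e j * A u j)"
  have b0: "\<beta> \<noteq> 0"
  proof
    assume "\<beta> = 0"
    then have "\<forall>i\<in>F. (\<Sum>j\<in>J. e j * A i j) = 0" using e(1) by (auto simp: R_def \<beta>_def)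
    then show False using J(2) e(2,3) unfolding lin_indep_cols_def by blast
  qed
  have "lin_indep_cols F A (insert u J)"
    using hermitian_lin_indep_cols_insert[OF fJ J(1)[unfolded R_def] J(2) fin(2) herm] e(1) b0
    by (simp add: R_def \<beta>_def)
  then have "card (insert u J) \<le> submatrix_rank F F A"
    using JF fin by (intro card_le_submatrix_rank) auto
  then have lo: "submatrix_rank F F A \<ge> submatrix_rank R R A + 2" using card.insert[OF fJ uJ] J(3) ge by linarith
  have "submatrix_rank F F A \<le> submatrix_rank F R A + 1" unfolding R_def by (rule submatrix_rank_delete_col[OF fin(1)])
  also have "submatrix_rank F R A \<le> submatrix_rank R R A + 1" unfolding R_def by (rule submatrix_rank_delete_row[OF fR[unfolded R_def]])
  finally show ?thesis using lo unfolding R_def by linarith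
qed

lemma principal_rank_pendant:
  assumes "finite S" "x \<in> S" "y \<in> S" "x \<noteq> y" "M x y \<noteq> 0" "M y x \<noteq> 0"
    "\<forall>j\<in>S. j \<noteq> y \<longrightarrow> M x j = 0" "\<forall>i\<in>S. i \<noteq> y \<longrightarrow> M i x = 0"
  shows "submatrix_rank S S M = submatrix_rank (S - {x, y}) (S - {x, y}) M + 2"
proof -
  have "submatrix_rank S S M = submatrix_rank (S - {x}) (S - {y}) M + 1"
    using assms by (intro submatrix_rank_pivot_row) auto
  also have "submatrix_rank (S - {x}) (S - {y}) M = submatrix_rank (S - {x} - {y}) (S - {y} - {x}) M + 1"
    using assms by (intro submatrix_rank_pivot_col) auto
  also have "S - {x} - {y} = S - {x, y}" by blast
  also have "S - {y} - {x} = S - {x, y}" by blast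
  finally show ?thesis by simp
qed

lemma principal_rank_isolated:
  assumes "finite S" "\<forall>j\<in>S. M x j = 0" "\<forall>i\<in>S. M i x = 0"
  shows "submatrix_rank S S M = submatrix_rank (S - {x}) (S - {x}) M"
proof -
  have "submatrix_rank S S M = submatrix_rank (S - {x}) S M" using assms(2) by (rule submatrix_rank_zero_row)
  also have "\<dots> = submatrix_rank (S - {x}) (S - {x}) M" using assms(1,3) by (intro submatrix_rank_zero_col) auto
  finally show ?thesis .
qed

text \<open>Schur complement of the block on \<open>{x, y}\<close> for a path \<open>t, x, y, z\<close> whose inner vertices
  have no other neighbours: only the entries \<open>(t, z)\<close> and \<open>(z, t)\<close> change.\<close>
definition contract_mat :: "('a \<Rightarrow> 'a \<Rightarrow> complex) \<Rightarrow> 'a \<Rightarrow> 'a \<Rightarrow> 'a \<Rightarrow> 'a \<Rightarrow> 'a \<Rightarrow> 'a \<Rightarrow> complex" where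
  "contract_mat M x y t z = (\<lambda>i j. M i j
     + (if i = t \<and> j = z then - (M t x * M y z / M y x) else 0)
     + (if i = z \<and> j = t then - (M z y * M x t / M x y) else 0))"

lemma principal_rank_contract:
  assumes fin: "finite S" and mem: "x \<in> S" "y \<in> S" "t \<in> S" "z \<in> S"
    and dist: "x \<noteq> y" "t \<noteq> x" "t \<noteq> y" "z \<noteq> x" "z \<noteq> y"
    and nz: "M y x \<noteq> 0" "M x y \<noteq> 0"
    and colx: "\<forall>i\<in>S. M i x \<noteq> 0 \<longrightarrow> i = t \<or> i = y"
    and rowy: "\<forall>j\<in>S. M y j \<noteq> 0 \<longrightarrow> j = x \<or> j = z"
    and rowx: "\<forall>j\<in>S. M x j \<noteq> 0 \<longrightarrow> j = t \<or> j = y"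
    and coly: "\<forall>i\<in>S. M i y \<noteq> 0 \<longrightarrow> i = x \<or> i = z"
  shows "submatrix_rank S S M = submatrix_rank (S - {x, y}) (S - {x, y}) (contract_mat M x y t z) + 2"
proof -
  define M1 where "M1 = M(t := (\<lambda>j. M t j + (- M t x / M y x) * M y j))"
  have Myy: "M y y = 0" using rowy mem dist by blast
  have r1: "submatrix_rank S S M1 = submatrix_rank S S M" unfolding M1_def using mem dist by (intro submatrix_rank_add_row_multiple) auto
  have M1x: "\<forall>i\<in>S. i \<noteq> y \<longrightarrow> M1 i x = 0"
  proof (intro ballI impI)
    fix i assume "i \<in> S" "i \<noteq> y"
    then show "M1 i x = 0" using colx nz(1) by (cases "i = t") (auto simp: M1_def)
  qed
  have M1yx: "M1 y x \<noteq> 0" using nz dist by (simp add: M1_def)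
  have r2: "submatrix_rank S S M1 = submatrix_rank (S - {y}) (S - {x}) M1 + 1"
    using fin mem M1yx M1x by (intro submatrix_rank_pivot_col) auto
  define M2 where "M2 = M1(z := (\<lambda>j. M1 z j + (- M1 z y / M1 x y) * M1 x j))"
  have r3: "submatrix_rank (S - {y}) (S - {x}) M2 = submatrix_rank (S - {y}) (S - {x}) M1"
    unfolding M2_def using mem dist by (intro submatrix_rank_add_row_multiple) auto
  have M1xj: "M1 x j = M x j" for j using dist by (simp add: M1_def)
  have M1zy: "M1 z y = M z y" using Myy by (simp add: M1_def)
  have M1iy: "M1 i y = M i y" for i using Myy by (simp add: M1_def)
  have M2y: "\<forall>i\<in>S - {y}. i \<noteq> x \<longrightarrow> M2 i y = 0"
  proof (intro ballI impI)
    fix i assume i: "i \<in> S - {y}" "i \<noteq> x"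
    show "M2 i y = 0"
    proof (cases "i = z")
      case True
      then show ?thesis using nz(2) M1zy M1xj[of y] by (simp add: M2_def)
    next
      case False
      then have "M2 i y = M i y" by (simp add: M2_def M1iy)
      also have "\<dots> = 0" using coly i False by blast
      finally show ?thesis .
    qed
  qed
  have M2xy: "M2 x y \<noteq> 0" using nz dist M1xj by (simp add: M2_def)
  have r4: "submatrix_rank (S - {y}) (S - {x}) M2 = submatrix_rank (S - {y} - {x}) (S - {x} - {y}) M2 + 1"
    using fin mem dist M2xy M2y by (intro submatrix_rank_pivot_col) auto
  have e1: "S - {y} - {x} = S - {x, y}" "S - {x} - {y} = S - {x, y}" by blast+
  have r5: "submatrix_rank (S - {x, y}) (S - {x, y}) M2 = submatrix_rank (S - {x, y}) (S - {x, y}) (contract_mat M x y t z)"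
  proof (rule submatrix_rank_cong, intro ballI)
    fix i j assume i: "i \<in> S - {x, y}" and j: "j \<in> S - {x, y}"
    have Myj: "M y j = (if j = z then M y z else 0)" using rowy j by auto
    have Mxj: "M x j = (if j = t then M x t else 0)" using rowx j by auto
    show "M2 i j = contract_mat M x y t z i j"
      using M1zy M1xj Myj Mxj by (cases "i = z"; cases "i = t") (auto simp: M2_def M1_def contract_mat_def)
  qed
  show ?thesis using r1 r2 r3 r4 r5 e1 by simp
qed

definition nbrs :: "'a set \<Rightarrow> ('a \<Rightarrow> 'a \<Rightarrow> bool) \<Rightarrow> 'a \<Rightarrow> 'a set" where
  "nbrs S E x = {y \<in> S. E x y}"

definition reach :: "'a set \<Rightarrow> ('a \<Rightarrow> 'a \<Rightarrow> bool) \<Rightarrow> 'a \<Rightarrow> 'a \<Rightarrow> bool" where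
  "reach S E = (induced_edges S E)\<^sup>*\<^sup>*"

definition comp_of :: "'a set \<Rightarrow> ('a \<Rightarrow> 'a \<Rightarrow> bool) \<Rightarrow> 'a \<Rightarrow> 'a set" where
  "comp_of S E v = {u \<in> S. reach S E v u}"

definition edge_set :: "'a set \<Rightarrow> ('a \<Rightarrow> 'a \<Rightarrow> bool) \<Rightarrow> 'a set set" where
  "edge_set S E = {{x, y} | x y. induced_edges S E x y}"

lemma components_eq_comp_of: "components S E = comp_of S E ` S"
  unfolding components_def comp_of_def reach_def by simp

lemma num_edges_eq_card_edge_set: "num_edges S E = card (edge_set S E)"
  unfolding num_edges_def edge_set_def by simp

lemma degree_eq_card_nbrs: "degree S E x = card (nbrs S E x)"
  unfolding degree_def nbrs_def by simp

lemma edge_set_subset_Pow: "edge_set S E \<subseteq> Pow S"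
  unfolding edge_set_def induced_edges_def by auto

lemma finite_edge_set: "finite S \<Longrightarrow> finite (edge_set S E)"
  using edge_set_subset_Pow finite_Pow_iff finite_subset by metis

lemma edge_set_delete_vertex:
  assumes sym: "\<forall>a b. E a b \<longrightarrow> E b a" and x: "x \<in> S"
  shows "edge_set S E = edge_set (S - {x}) E \<union> (\<lambda>y. {x, y}) ` nbrs S E x"
proof (intro equalityI subsetI)
  fix e assume "e \<in> edge_set S E"
  then obtain a b where e: "e = {a, b}" "a \<in> S" "b \<in> S" "E a b"
    unfolding edge_set_def induced_edges_def by auto
  show "e \<in> edge_set (S - {x}) E \<union> (\<lambda>y. {x, y}) ` nbrs S E x"
  proof (cases "a = x")
    case True
    then have "e \<in> (\<lambda>y. {x, y}) ` nbrs S E x" using e by (auto simp: nbrs_def)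
    then show ?thesis by (rule UnI2)
  next
    case False
    show ?thesis
    proof (cases "b = x")
      case True
      then have "e = {x, a}" "a \<in> nbrs S E x" using e sym by (auto simp: nbrs_def)
      then have "e \<in> (\<lambda>y. {x, y}) ` nbrs S E x" by blast
      then show ?thesis by (rule UnI2)
    next
      case False
      then have "induced_edges (S - {x}) E a b" using e \<open>a \<noteq> x\<close> by (simp add: induced_edges_def)
      then have "e \<in> edge_set (S - {x}) E" unfolding edge_set_def using e(1) by blast
      then show ?thesis by (rule UnI1)
    qed
  qed
next
  fix e assume "e \<in> edge_set (S - {x}) E \<union> (\<lambda>y. {x, y}) ` nbrs S E x"
  then show "e \<in> edge_set S E"
  proof
    assume "e \<in> edge_set (S - {x}) E"
    then obtain a b where "e = {a, b}" "induced_edges (S - {x}) E a b" unfolding edge_set_def by blast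
    then have "e = {a, b}" "induced_edges S E a b" by (auto simp: induced_edges_def)
    then show ?thesis unfolding edge_set_def by blast
  next
    assume "e \<in> (\<lambda>y. {x, y}) ` nbrs S E x"
    then obtain y where "e = {x, y}" "y \<in> S" "E x y" by (auto simp: nbrs_def)
    then have "e = {x, y}" "induced_edges S E x y" using x by (auto simp: induced_edges_def)
    then show ?thesis unfolding edge_set_def by blast
  qed
qed

lemma num_edges_delete_vertex:
  assumes sym: "\<forall>a b. E a b \<longrightarrow> E b a" and x: "x \<in> S" and fin: "finite S"
  shows "num_edges S E = num_edges (S - {x}) E + degree S E x"
proof -
  have disj: "edge_set (S - {x}) E \<inter> (\<lambda>y. {x, y}) ` nbrs S E x = {}"
    using edge_set_subset_Pow[of "S - {x}" E] by blast
  have inj: "inj_on (\<lambda>y. {x, y}) (nbrs S E x)"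
    by (rule inj_onI) (metis doubleton_eq_iff)
  have fN: "finite (nbrs S E x)" using fin by (simp add: nbrs_def)
  have "card (edge_set S E) = card (edge_set (S - {x}) E) + card ((\<lambda>y. {x, y}) ` nbrs S E x)"
    unfolding edge_set_delete_vertex[OF sym x]
    by (rule card_Un_disjoint) (use finite_edge_set fin fN disj in auto)
  also have "card ((\<lambda>y. {x, y}) ` nbrs S E x) = card (nbrs S E x)" using card_image[OF inj] .
  finally show ?thesis by (simp add: num_edges_eq_card_edge_set degree_eq_card_nbrs)
qed

lemma reach_mono:
  assumes "T \<subseteq> S" "reach T E a b"
  shows "reach S E a b"
  using assms(2) unfolding reach_def
proof (induction rule: rtranclp_induct)
  case base then show ?case by simp
next
  case (step y z)
  then have "induced_edges S E y z" using assms(1) by (auto simp: induced_edges_def)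
  then show ?case by (rule rtranclp.rtrancl_into_rtrancl[OF step(3)])
qed

lemma reach_sym:
  assumes sym: "\<forall>a b. E a b \<longrightarrow> E b a" and r: "reach S E a b"
  shows "reach S E b a"
  using r unfolding reach_def
proof (induction rule: rtranclp_induct)
  case base then show ?case by simp
next
  case (step y z)
  then have "induced_edges S E z y" using sym by (auto simp: induced_edges_def)
  then show ?case using step(3) by (rule converse_rtranclp_into_rtranclp)
qed

lemma reach_trans: "reach S E a b \<Longrightarrow> reach S E b c \<Longrightarrow> reach S E a c"
  unfolding reach_def by simp

lemma reach_edge: "a \<in> S \<Longrightarrow> b \<in> S \<Longrightarrow> E a b \<Longrightarrow> reach S E a b"
  unfolding reach_def by (rule r_into_rtranclp) (simp add: induced_edges_def)

lemma comp_of_eq: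
  assumes sym: "\<forall>a b. E a b \<longrightarrow> E b a" and ab: "reach S E a b"
  shows "comp_of S E a = comp_of S E b"
proof -
  have ba: "reach S E b a" by (rule reach_sym[OF sym ab])
  have "reach S E a u \<longleftrightarrow> reach S E b u" for u
    using reach_trans[OF ab, of u] reach_trans[OF ba, of u] by auto
  then show ?thesis unfolding comp_of_def by simp
qed

lemma comp_of_self: "a \<in> S \<Longrightarrow> a \<in> comp_of S E a"
  unfolding comp_of_def reach_def by simp

lemma comp_of_subset: "comp_of S E a \<subseteq> S"
  unfolding comp_of_def by auto

lemma reach_delete_vertex_no_nbr:
  assumes sym: "\<forall>a b. E a b \<longrightarrow> E b a"
    and r: "reach S E w u" and w: "w \<in> S - {x}"
    and no: "\<forall>y\<in>nbrs S E x. \<not> reach (S - {x}) E w y"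
  shows "reach (S - {x}) E w u \<and> u \<noteq> x"
  using r unfolding reach_def
proof (induction rule: rtranclp_induct)
  case base then show ?case using w by simp
next
  case (step y z)
  then have ry: "reach (S - {x}) E w y" "y \<noteq> x" by (auto simp: reach_def)
  have yz: "y \<in> S" "z \<in> S" "E y z" using step(2) by (auto simp: induced_edges_def)
  have "z \<noteq> x"
  proof
    assume "z = x"
    then have "y \<in> nbrs S E x" using yz sym by (auto simp: nbrs_def)
    then show False using no ry(1) by blast
  qed
  then have "induced_edges (S - {x}) E y z" using yz ry(2) by (simp add: induced_edges_def)
  then have "(induced_edges (S - {x}) E)\<^sup>*\<^sup>* w z"
    using ry(1) unfolding reach_def by (simp add: rtranclp.rtrancl_into_rtrancl)
  then show ?case using \<open>z \<noteq> x\<close> by (simp add: reach_def)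
qed

lemma components_obtain:
  assumes "K \<in> components S E"
  obtains w where "w \<in> S" "K = comp_of S E w"
proof -
  have "\<exists>w\<in>S. K = comp_of S E w" using assms unfolding components_eq_comp_of by (simp add: image_iff)
  then show ?thesis using that by auto
qed

lemma finite_components: "finite S \<Longrightarrow> finite (components S E)"
  by (simp add: components_eq_comp_of)

lemma num_components_delete_vertex_le:
  assumes sym: "\<forall>a b. E a b \<longrightarrow> E b a" and x: "x \<in> S" and fin: "finite S"
  shows "num_components (S - {x}) E + 1 \<le> num_components S E + card (comp_of (S - {x}) E ` nbrs S E x)"
proof -
  let ?N = "nbrs S E x"
  have sub: "components (S - {x}) E \<subseteq> (components S E - {comp_of S E x}) \<union> comp_of (S - {x}) E ` ?N"
  proof
    fix K assume "K \<in> components (S - {x}) E"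
    then obtain w where w: "w \<in> S - {x}" "K = comp_of (S - {x}) E w" by (rule components_obtain)
    show "K \<in> (components S E - {comp_of S E x}) \<union> comp_of (S - {x}) E ` ?N"
    proof (cases "\<exists>y\<in>?N. reach (S - {x}) E w y")
      case True
      then obtain y where y: "y \<in> ?N" "reach (S - {x}) E w y" by blast
      then have "K = comp_of (S - {x}) E y" using w comp_of_eq[OF sym] by metis
      then show ?thesis using y(1) by blast
    next
      case False
      then have no: "\<forall>y\<in>?N. \<not> reach (S - {x}) E w y" by blast
      have "K = comp_of S E w"
      proof (intro equalityI subsetI)
        fix u assume "u \<in> K"
        then have "u \<in> S" "reach (S - {x}) E w u" using w(2) by (auto simp: comp_of_def)
        then show "u \<in> comp_of S E w" using reach_mono[of "S - {x}" S] by (auto simp: comp_of_def)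
      next
        fix u assume "u \<in> comp_of S E w"
        then have "u \<in> S" "reach S E w u" by (auto simp: comp_of_def)
        then show "u \<in> K" using reach_delete_vertex_no_nbr[OF sym _ w(1) no] w(2) by (auto simp: comp_of_def)
      qed
      moreover have "K \<noteq> comp_of S E x"
      proof
        assume "K = comp_of S E x"
        then have "x \<in> K" using comp_of_self[OF x] by simp
        then show False using w(2) comp_of_subset[of "S - {x}" E w] by blast
      qed
      moreover have "comp_of S E w \<in> components S E" using w(1) by (auto simp: components_eq_comp_of)
      ultimately show ?thesis by blast
    qed
  qed
  have f1: "finite (components S E - {comp_of S E x})" using finite_components[OF fin] by simp
  have f2: "finite (comp_of (S - {x}) E ` ?N)" using fin by (simp add: nbrs_def)
  have "card (components (S - {x}) E) \<le> card ((components S E - {comp_of S E x}) \<union> comp_of (S - {x}) E ` ?N)"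
    by (rule card_mono) (use f1 f2 sub in auto)
  also have "\<dots> \<le> card (components S E - {comp_of S E x}) + card (comp_of (S - {x}) E ` ?N)"
    by (rule card_Un_le)
  also have "card (components S E - {comp_of S E x}) = card (components S E) - 1"
    using x by (simp add: components_eq_comp_of)
  finally have le: "card (components (S - {x}) E) \<le> card (components S E) - 1 + card (comp_of (S - {x}) E ` ?N)" .
  have "comp_of S E x \<in> components S E" using x by (simp add: components_eq_comp_of)
  then have "card (components S E) > 0" using finite_components[OF fin] card_gt_0_iff by blast
  then show ?thesis using le unfolding num_components_def by linarith
qed

lemma reach_delete_unreachable:
  assumes r: "reach S E w u" and w: "w \<noteq> x"
    and no: "\<forall>v. reach S E w v \<longrightarrow> v \<noteq> x"
  shows "reach (S - {x}) E w u"
  using r unfolding reach_def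
proof (induction rule: rtranclp_induct)
  case base then show ?case by simp
next
  case (step y z)
  have "y \<noteq> x" using no step(1) unfolding reach_def by blast
  moreover have "(induced_edges S E)\<^sup>*\<^sup>* w z" by (rule rtranclp.rtrancl_into_rtrancl[OF step(1) step(2)])
  then have "z \<noteq> x" using no unfolding reach_def by blast
  ultimately have "y \<noteq> x" "z \<noteq> x" by simp_all
  then have "induced_edges (S - {x}) E y z" using step(2) by (simp add: induced_edges_def)
  then show ?case using step(3) by (simp add: rtranclp.rtrancl_into_rtrancl)
qed

lemma comp_of_delete_vertex:
  assumes w: "w \<in> S" and xS: "x \<in> S" and x: "x \<notin> comp_of S E w"
  shows "comp_of (S - {x}) E w = comp_of S E w" and "w \<in> S - {x}"
proof -
  have wx: "w \<noteq> x" using x comp_of_self[OF w, of E] by auto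
  then show "w \<in> S - {x}" using w by simp
  have no: "\<forall>v. reach S E w v \<longrightarrow> v \<noteq> x" using x xS by (auto simp: comp_of_def)
  show "comp_of (S - {x}) E w = comp_of S E w"
  proof (intro equalityI subsetI)
    fix u assume "u \<in> comp_of S E w"
    then have "u \<in> S" "reach S E w u" "u \<noteq> x" using x by (auto simp: comp_of_def)
    then show "u \<in> comp_of (S - {x}) E w" using reach_delete_unreachable[OF _ wx no] by (auto simp: comp_of_def)
  next
    fix u assume "u \<in> comp_of (S - {x}) E w"
    then show "u \<in> comp_of S E w" using reach_mono[of "S - {x}" S] by (auto simp: comp_of_def)
  qed
qed

lemma num_components_le_delete_non_isolated:
  assumes sym: "\<forall>a b. E a b \<longrightarrow> E b a" and irr: "\<forall>a. \<not> E a a"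
    and x: "x \<in> S" and fin: "finite S" and y0: "y0 \<in> nbrs S E x"
  shows "num_components S E \<le> num_components (S - {x}) E"
proof -
  have y0S: "y0 \<in> S - {x}" using y0 irr by (auto simp: nbrs_def)
  have rx: "reach S E y0 x" using y0 x sym by (intro reach_edge) (auto simp: nbrs_def)
  define f where "f = (\<lambda>K. if x \<in> K then comp_of (S - {x}) E y0 else K)"
  have cx: "K = comp_of S E x" if hK: "K \<in> components S E" "x \<in> K" for K
  proof -
    obtain w where w: "w \<in> S" "K = comp_of S E w" by (rule components_obtain[OF hK(1)])
    then have "reach S E w x" using that(2) by (auto simp: comp_of_def)
    then show ?thesis using w comp_of_eq[OF sym] by simp
  qed
  have ncx: "K = comp_of (S - {x}) E w \<and> w \<in> S - {x}" if "w \<in> S" "K = comp_of S E w" "x \<notin> K" for K w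
    using comp_of_delete_vertex[of w S x E] that x by simp
  have maps: "f ` components S E \<subseteq> components (S - {x}) E"
  proof
    fix L assume "L \<in> f ` components S E"
    then obtain K where K: "K \<in> components S E" "L = f K" by blast
    obtain w where w: "w \<in> S" "K = comp_of S E w" by (rule components_obtain[OF K(1)])
    show "L \<in> components (S - {x}) E"
    proof (cases "x \<in> K")
      case True
      then show ?thesis using K(2) y0S by (simp add: f_def components_eq_comp_of)
    next
      case False
      then show ?thesis using K(2) ncx[OF w False] by (simp add: f_def components_eq_comp_of)
    qed
  qed
  have inj: "inj_on f (components S E)"
  proof (rule inj_onI)
    fix K1 K2 assume K: "K1 \<in> components S E" "K2 \<in> components S E" "f K1 = f K2"
    have cross: False if hK: "x \<in> Ka" "x \<notin> Kb" "Kb \<in> components S E" "f Ka = f Kb" for Ka Kb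
    proof -
      obtain w where w: "w \<in> S" "Kb = comp_of S E w" by (rule components_obtain[OF hK(3)])
      have "f Kb = Kb" using that(2) by (simp add: f_def)
      then have "comp_of (S - {x}) E y0 = Kb" using that(1,4) by (simp add: f_def)
      then have "y0 \<in> Kb" using comp_of_self[OF y0S, of E] by simp
      then have "reach S E w y0" using w by (auto simp: comp_of_def)
      then have "reach S E w x" using reach_trans[OF _ rx] by blast
      then have "x \<in> Kb" using w x by (auto simp: comp_of_def)
      then show False using that(2) by simp
    qed
    show "K1 = K2"
    proof (cases "x \<in> K1")
      case True
      show ?thesis
      proof (cases "x \<in> K2")
        case True
        then show ?thesis using cx[OF K(1) \<open>x \<in> K1\<close>] cx[OF K(2) True] by simp
      next
        case False
        then show ?thesis using cross[OF \<open>x \<in> K1\<close> False K(2,3)] by simp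
      qed
    next
      case False
      show ?thesis
      proof (cases "x \<in> K2")
        case True
        then show ?thesis using cross[OF True False K(1) K(3)[symmetric]] by simp
      next
        case False
        then show ?thesis using K(3) \<open>x \<notin> K1\<close> by (simp add: f_def)
      qed
    qed
  qed
  show ?thesis unfolding num_components_def
    using card_inj_on_le[OF inj maps finite_components[of "S - {x}" E]] fin by simp
qed

lemma theta_delete_vertex_le:
  assumes sym: "\<forall>a b. E a b \<longrightarrow> E b a" and x: "x \<in> S" and fin: "finite S"
  shows "theta (S - {x}) E \<le> theta S E - int (degree S E x) + int (card (comp_of (S - {x}) E ` nbrs S E x))"
proof -
  have e: "num_edges S E = num_edges (S - {x}) E + degree S E x" by (rule num_edges_delete_vertex[OF sym x fin])
  have c: "card S = card (S - {x}) + 1" using card_Suc_Diff1[OF fin x] by simp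
  have w: "num_components (S - {x}) E + 1 \<le> num_components S E + card (comp_of (S - {x}) E ` nbrs S E x)"
    by (rule num_components_delete_vertex_le[OF sym x fin])
  show ?thesis unfolding theta_def using e c w by linarith
qed

lemma theta_delete_vertex_mono:
  assumes sym: "\<forall>a b. E a b \<longrightarrow> E b a" and fin: "finite S"
  shows "theta (S - {x}) E \<le> theta S E"
proof (cases "x \<in> S")
  case True
  have "card (comp_of (S - {x}) E ` nbrs S E x) \<le> card (nbrs S E x)"
    by (rule card_image_le) (use fin in \<open>simp add: nbrs_def\<close>)
  then show ?thesis using theta_delete_vertex_le[OF sym True fin] by (simp add: degree_eq_card_nbrs)
next
  case False
  then show ?thesis by simp
qed

lemma theta_delete_cycle_vertex:
  assumes sym: "\<forall>a b. E a b \<longrightarrow> E b a" and x: "x \<in> S" and fin: "finite S"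
    and ab: "a \<in> nbrs S E x" "b \<in> nbrs S E x" "a \<noteq> b" "reach (S - {x}) E a b"
  shows "theta (S - {x}) E \<le> theta S E - 1"
proof -
  have fN: "finite (nbrs S E x)" using fin by (simp add: nbrs_def)
  have "comp_of (S - {x}) E a = comp_of (S - {x}) E b" by (rule comp_of_eq[OF sym ab(4)])
  then have "\<not> inj_on (comp_of (S - {x}) E) (nbrs S E x)"
  proof (intro notI)
    assume "inj_on (comp_of (S - {x}) E) (nbrs S E x)" "comp_of (S - {x}) E a = comp_of (S - {x}) E b"
    then have "a = b" using ab(1,2) by (rule inj_onD)
    then show False using ab(3) by simp
  qed
  then have "card (comp_of (S - {x}) E ` nbrs S E x) \<noteq> card (nbrs S E x)"
    using inj_on_iff_eq_card[OF fN] by blast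
  moreover have "card (comp_of (S - {x}) E ` nbrs S E x) \<le> card (nbrs S E x)"
    by (rule card_image_le[OF fN])
  ultimately show ?thesis using theta_delete_vertex_le[OF sym x fin] by (simp add: degree_eq_card_nbrs)
qed

lemma theta_le_delete_pendant:
  assumes sym: "\<forall>a b. E a b \<longrightarrow> E b a" and irr: "\<forall>a. \<not> E a a"
    and x: "x \<in> S" and fin: "finite S" and d: "nbrs S E x = {y}"
  shows "theta S E \<le> theta (S - {x}) E"
proof -
  have e: "num_edges S E = num_edges (S - {x}) E + 1"
    using num_edges_delete_vertex[OF sym x fin] d by (simp add: degree_eq_card_nbrs)
  have c: "card S = card (S - {x}) + 1" using card_Suc_Diff1[OF fin x] by simp
  have "num_components S E \<le> num_components (S - {x}) E"
    by (rule num_components_le_delete_non_isolated[OF sym irr x fin, of y]) (use d in simp)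
  then show ?thesis unfolding theta_def using e c by linarith
qed

lemma theta_mono:
  assumes sym: "\<forall>a b. E a b \<longrightarrow> E b a" and fin: "finite S" and T: "T \<subseteq> S"
  shows "theta T E \<le> theta S E"
proof -
  have "finite D \<Longrightarrow> theta (S - D) E \<le> theta S E" for D
  proof (induction D rule: finite_induct)
    case empty then show ?case by simp
  next
    case (insert d D)
    have "S - insert d D = (S - D) - {d}" by blast
    then have "theta (S - insert d D) E \<le> theta (S - D) E"
      using theta_delete_vertex_mono[OF sym, of "S - D" d] fin by simp
    then show ?case using insert(3) by simp
  qed
  moreover have "S - (S - T) = T" using T by blast
  ultimately show ?thesis using finite_Diff[OF fin, of T] by metis
qed

fun is_path :: "('a \<Rightarrow> 'a \<Rightarrow> bool) \<Rightarrow> 'a list \<Rightarrow> bool" where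
  "is_path E [] = True"
| "is_path E [a] = True"
| "is_path E (a # b # t) = (E a b \<and> is_path E (b # t))"

lemma is_path_reach_hd:
  "is_path E xs \<Longrightarrow> set xs \<subseteq> T \<Longrightarrow> u \<in> set xs \<Longrightarrow> reach T E (hd xs) u"
proof (induction E xs rule: is_path.induct)
  case (1 E) then show ?case by simp
next
  case (2 E a) then show ?case by (simp add: reach_def)
next
  case (3 E a b t)
  show ?case
  proof (cases "u = a")
    case True then show ?thesis by (simp add: reach_def)
  next
    case False
    then have "u \<in> set (b # t)" using 3(4) by simp
    then have r: "reach T E b u" using 3 by simp
    have "reach T E a b" using 3(2,3) by (intro reach_edge) auto
    then show ?thesis using reach_trans[OF _ r] by simp
  qed
qed

lemma is_path_tl: "is_path E (a # ys) \<Longrightarrow> is_path E ys"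
  by (cases ys) auto

lemma min_degree_two_cycle_vertex:
  assumes sym: "\<forall>a b. E a b \<longrightarrow> E b a" and irr: "\<forall>a. \<not> E a a"
    and fin: "finite S" and ne: "s \<in> S"
    and deg2: "\<forall>a\<in>S. \<exists>b c. b \<noteq> c \<and> b \<in> nbrs S E a \<and> c \<in> nbrs S E a"
  shows "\<exists>x\<in>S. \<exists>a b. a \<in> nbrs S E x \<and> b \<in> nbrs S E x \<and> a \<noteq> b \<and> reach (S - {x}) E a b"
proof -
  define P where "P = {xs. xs \<noteq> [] \<and> distinct xs \<and> set xs \<subseteq> S \<and> is_path E xs}"
  have fP: "finite P"
    by (rule finite_subset[OF _ finite_subset_distinct[OF fin]]) (auto simp: P_def)
  have sP: "[s] \<in> P" using ne by (simp add: P_def)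
  define m where "m = Max (length ` P)"
  have "m \<in> length ` P" unfolding m_def using fP sP by (intro Max_in) auto
  then obtain xs where xs: "xs \<in> P" "length xs = m" by auto
  have maxi: "length zs \<le> m" if "zs \<in> P" for zs
    unfolding m_def using fP that by (intro Max_ge) auto
  obtain w ys where wys: "xs = w # ys" using xs(1) by (cases xs) (auto simp: P_def)
  have wS: "w \<in> S" and dist: "distinct (w # ys)" and ysS: "set ys \<subseteq> S" and pth: "is_path E (w # ys)"
    using xs(1) wys by (auto simp: P_def)
  have inys: "n \<in> set ys" if "n \<in> nbrs S E w" for n
  proof (rule ccontr)
    assume nys: "n \<notin> set ys"
    have "n \<noteq> w" using that irr by (auto simp: nbrs_def)
    then have "n \<notin> set xs" using nys wys by simp
    moreover have "n \<in> S" "E n w" using that sym by (auto simp: nbrs_def)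
    ultimately have "n # xs \<in> P" using xs(1) wys by (auto simp: P_def)
    then have "length (n # xs) \<le> m" by (rule maxi)
    then show False using xs(2) by simp
  qed
  obtain b c where bc: "b \<noteq> c" "b \<in> nbrs S E w" "c \<in> nbrs S E w" using deg2 wS by blast
  have bys: "b \<in> set ys" and cys: "c \<in> set ys" using inys bc by auto
  have pys: "is_path E ys" using pth by (rule is_path_tl)
  have rb: "reach (set ys) E (hd ys) b" and rc: "reach (set ys) E (hd ys) c"
    using is_path_reach_hd[OF pys order_refl] bys cys by auto
  have "reach (set ys) E b c" using reach_trans[OF reach_sym[OF sym rb] rc] .
  moreover have "set ys \<subseteq> S - {w}" using ysS dist by auto
  ultimately have "reach (S - {w}) E b c" by (rule reach_mono[rotated])
  then show ?thesis using wS bc by blast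
qed

lemma theta_empty: "theta {} E = 0"
  by (simp add: theta_def num_edges_eq_card_edge_set edge_set_def induced_edges_def num_components_def components_eq_comp_of)

lemma graph_vertex_cases:
  assumes sym: "\<forall>a b. E a b \<longrightarrow> E b a" and irr: "\<forall>a. \<not> E a a"
    and fin: "finite S" and s: "s \<in> S"
  obtains (isolated) x where "x \<in> S" "nbrs S E x = {}"
  | (pendant) x y where "x \<in> S" "nbrs S E x = {y}"
  | (on_cycle) x a b where "x \<in> S" "a \<in> nbrs S E x" "b \<in> nbrs S E x" "a \<noteq> b"
      "reach (S - {x}) E a b"
proof (cases "\<exists>x\<in>S. nbrs S E x = {} \<or> (\<exists>y. nbrs S E x = {y})")
  case True
  then show ?thesis using that(1,2) by blast
next
  case False
  have "\<forall>a\<in>S. \<exists>b c. b \<noteq> c \<and> b \<in> nbrs S E a \<and> c \<in> nbrs S E a"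
  proof
    fix a assume a: "a \<in> S"
    obtain b where b: "b \<in> nbrs S E a" using False a by blast
    moreover obtain c where "c \<in> nbrs S E a" "c \<noteq> b" using False a b by blast
    ultimately show "\<exists>b c. b \<noteq> c \<and> b \<in> nbrs S E a \<and> c \<in> nbrs S E a" by blast
  qed
  then show ?thesis using min_degree_two_cycle_vertex[OF sym irr fin s] that(3) by blast
qed

lemma rank_le_rank_add_theta:
  assumes sym: "\<forall>a b. E a b \<longrightarrow> E b a" and irr: "\<forall>a. \<not> E a a"
    and fin: "finite S"
    and pA: "\<forall>i\<in>S. \<forall>j\<in>S. MA i j \<noteq> 0 \<longleftrightarrow> E i j"
    and pB: "\<forall>i\<in>S. \<forall>j\<in>S. MB i j \<noteq> 0 \<longleftrightarrow> E i j"
  shows "int (submatrix_rank S S MA) \<le> int (submatrix_rank S S MB) + 2 * theta S E"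
  using fin pA pB
proof (induction "card S" arbitrary: S rule: less_induct)
  case less
  note fin = less.prems(1) and pA = less.prems(2) and pB = less.prems(3)
  have IH: "int (submatrix_rank T T MA) \<le> int (submatrix_rank T T MB) + 2 * theta T E"
    if "T \<subseteq> S" "T \<noteq> S" for T
  proof -
    have fT: "finite T" using that fin finite_subset by blast
    have "card T < card S" using that fin by (simp add: psubset_card_mono)
    then show ?thesis using less.hyps fT pA pB that(1) by blast
  qed
  show ?case
  proof (cases "S = {}")
    case True
    then show ?thesis using submatrix_rank_le_card[of "{}" "{}" MA] by (simp add: theta_empty)
  next
    case False
    then obtain s where s: "s \<in> S" by blast
    show ?thesis
    proof (cases rule: graph_vertex_cases[OF sym irr fin s, case_names isolated pendant on_cycle])
      case (isolated x)
      have nx: "\<not> E x j" "\<not> E j x" if "j \<in> S" for j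
        using isolated that sym by (auto simp: nbrs_def)
      have r: "submatrix_rank S S M = submatrix_rank (S - {x}) (S - {x}) M"
        if "\<forall>i\<in>S. \<forall>j\<in>S. M i j \<noteq> 0 \<longleftrightarrow> E i j" for M
        using nx that isolated(1) by (intro principal_rank_isolated[OF fin]) auto
      have "int (submatrix_rank (S - {x}) (S - {x}) MA)
          \<le> int (submatrix_rank (S - {x}) (S - {x}) MB) + 2 * theta (S - {x}) E"
        using isolated(1) by (intro IH) auto
      then show ?thesis using theta_delete_vertex_mono[OF sym fin, of x] r[OF pA] r[OF pB] by linarith
    next
      case (pendant x y)
      have y: "y \<in> S" "E x y" "E y x" "x \<noteq> y" using pendant sym irr by (auto simp: nbrs_def)
      have only_y: "\<not> E x j" "\<not> E j x" if "j \<in> S" "j \<noteq> y" for j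
        using pendant that sym by (auto simp: nbrs_def)
      have r: "submatrix_rank S S M = submatrix_rank (S - {x, y}) (S - {x, y}) M + 2"
        if "\<forall>i\<in>S. \<forall>j\<in>S. M i j \<noteq> 0 \<longleftrightarrow> E i j" for M
        using that pendant(1) y only_y by (intro principal_rank_pendant[OF fin]) auto
      have "theta (S - {x, y}) E \<le> theta S E"
        using pendant(1) y(1) fin by (intro theta_mono[OF sym]) auto
      moreover have "int (submatrix_rank (S - {x, y}) (S - {x, y}) MA)
          \<le> int (submatrix_rank (S - {x, y}) (S - {x, y}) MB) + 2 * theta (S - {x, y}) E"
        using pendant(1) by (intro IH) auto
      ultimately show ?thesis using r[OF pA] r[OF pB] by linarith
    next
      case (on_cycle x a b)
      have "theta (S - {x}) E \<le> theta S E - 1"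
        by (rule theta_delete_cycle_vertex[OF sym on_cycle(1) fin on_cycle(2-5)])
      moreover have "submatrix_rank S S MA \<le> submatrix_rank (S - {x}) (S - {x}) MA + 2"
        "submatrix_rank (S - {x}) (S - {x}) MB \<le> submatrix_rank S S MB"
        by (rule principal_rank_delete_vertex(1,2)[OF fin])+
      moreover have "int (submatrix_rank (S - {x}) (S - {x}) MA)
          \<le> int (submatrix_rank (S - {x}) (S - {x}) MB) + 2 * theta (S - {x}) E"
        using on_cycle(1) by (intro IH) auto
      ultimately show ?thesis by linarith
    qed
  qed
qed

lemma principal_rank_diag_pivot:
  assumes fin: "finite F" and vF: "v \<notin> F" and uF: "u \<in> F" and dnz: "N v v \<noteq> 0"
    and rowv: "\<forall>j\<in>F. j \<noteq> u \<longrightarrow> N v j = 0" and colv: "\<forall>i\<in>F. i \<noteq> u \<longrightarrow> N i v = 0"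
  obtains N' where "\<forall>i\<in>F. \<forall>j\<in>F. (i, j) \<noteq> (u, u) \<longrightarrow> N' i j = N i j"
    "submatrix_rank (insert v F) (insert v F) N = submatrix_rank F F N' + 1"
proof -
  define X where "X = insert v F"
  define N1 where "N1 = N(u := (\<lambda>j. N u j + (- N u v / N v v) * N v j))"
  have uv: "u \<noteq> v" using uF vF by blast
  have r1: "submatrix_rank X X N1 = submatrix_rank X X N" unfolding N1_def using uF uv
    by (intro submatrix_rank_add_row_multiple) (auto simp: X_def)
  have col: "\<forall>i\<in>X. i \<noteq> v \<longrightarrow> N1 i v = 0"
    using dnz colv by (auto simp: N1_def X_def)
  have r2: "submatrix_rank X X N1 = submatrix_rank (X - {v}) (X - {v}) N1 + 1"
    using fin dnz uv col by (intro submatrix_rank_pivot_col) (auto simp: X_def N1_def)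
  have XF: "X - {v} = F" using vF by (auto simp: X_def)
  have "\<forall>i\<in>F. \<forall>j\<in>F. (i, j) \<noteq> (u, u) \<longrightarrow> N1 i j = N i j"
    using rowv by (auto simp: N1_def)
  then show ?thesis using that r1 r2 XF by (simp add: X_def)
qed

lemma divide_cnj_unit:
  assumes "cmod a = 1"
  shows "b / cnj a = b * (a :: complex)"
proof -
  have "a * cnj a = 1" using complex_norm_square[of a] assms by simp
  moreover have "cnj a \<noteq> 0" using assms by auto
  ultimately show ?thesis by (simp add: field_simps)
qed

lemma divide_unit: "cmod a = 1 \<Longrightarrow> b / a = b * cnj (a :: complex)"
  using divide_cnj_unit[of "cnj a" b] by simp

lemma unit_cnj_add_eq_zero_iff:
  fixes h s q :: complex
  assumes h: "cmod h = 1" and s: "s * s = 1"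
  shows "cnj h + s * q = 0 \<longleftrightarrow> q * h = - s"
proof -
  have hh: "h * cnj h = 1" using complex_norm_square[of h] h by simp
  have nz: "s * h \<noteq> 0" using h s by auto
  have "s * h * (cnj h + s * q) = s * (h * cnj h) + (s * s) * (q * h)" by (simp add: algebra_simps)
  also have "\<dots> = s + q * h" using hh s by simp
  finally have eq: "s * h * (cnj h + s * q) = s + q * h" .
  have "cnj h + s * q = 0 \<longleftrightarrow> s * h * (cnj h + s * q) = 0" using nz by simp
  also have "\<dots> \<longleftrightarrow> q * h = - s" unfolding eq by (auto simp: add_eq_0_iff2 add.commute)
  finally show ?thesis .
qed

lemma gain_adj_mat_nonzero_iff:
  assumes "unit_gain E \<phi>"
  shows "gain_adj_mat E \<phi> i j \<noteq> 0 \<longleftrightarrow> E i j"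
proof -
  have "E i j \<Longrightarrow> \<phi> i j \<noteq> 0" using assms unfolding unit_gain_def by fastforce
  then show ?thesis by (auto simp: gain_adj_mat_def)
qed

lemma bij_betw_add_mod:
  assumes "k0 < (p::nat)"
  shows "bij_betw (\<lambda>i. (k0 + i) mod p) {..<p} {..<p}"
proof -
  have im: "(\<lambda>i. (k0 + i) mod p) ` {..<p} = {..<p}"
  proof (intro equalityI subsetI)
    fix j assume "j \<in> (\<lambda>i. (k0 + i) mod p) ` {..<p}"
    then show "j \<in> {..<p}" using assms by auto
  next
    fix j assume j: "j \<in> {..<p}"
    define i where "i = (j + p - k0) mod p"
    have "(k0 + i) mod p = (k0 + (j + p - k0)) mod p" unfolding i_def by (simp add: mod_add_right_eq)
    also have "k0 + (j + p - k0) = j + p" using assms by simp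
    also have "(j + p) mod p = j" using j by simp
    finally have "(k0 + i) mod p = j" .
    moreover have "i \<in> {..<p}" using assms by (simp add: i_def)
    ultimately show "j \<in> (\<lambda>i. (k0 + i) mod p) ` {..<p}" by (metis imageI)
  qed
  have "inj_on (\<lambda>i. (k0 + i) mod p) {..<p}"
    by (rule eq_card_imp_inj_on) (simp_all add: im)
  then show ?thesis using im by (simp add: bij_betw_def)
qed

lemma degree_2_nbrs:
  assumes "finite V" "degree V E x = 2" "a \<in> V" "b \<in> V" "a \<noteq> b" "E x a" "E x b" "j \<in> V"
  shows "E x j \<longleftrightarrow> j = a \<or> j = b"
proof -
  have "{a, b} \<subseteq> {y \<in> V. E x y}" using assms by auto
  moreover have "card {a, b} = card {y \<in> V. E x y}" using assms by (simp add: degree_def)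
  ultimately have "{a, b} = {y \<in> V. E x y}" using assms(1) by (intro card_subset_eq) auto
  then show ?thesis using assms(8) by blast
qed

lemma degree_3_nbrs:
  assumes "finite V" "degree V E x = 3" "a \<in> V" "b \<in> V" "a \<noteq> b" "E x a" "E x b"
  obtains c where "c \<in> V" "c \<noteq> a" "c \<noteq> b" "\<And>j. j \<in> V \<Longrightarrow> E x j \<longleftrightarrow> j = a \<or> j = b \<or> j = c"
proof -
  let ?N = "{y \<in> V. E x y}"
  have "\<not> ?N \<subseteq> {a, b}"
  proof
    assume "?N \<subseteq> {a, b}"
    then have "card ?N \<le> card {a, b}" by (intro card_mono) auto
    then show False using assms(2,5) by (simp add: degree_def)
  qed
  then obtain c where c: "c \<in> V" "E x c" "c \<noteq> a" "c \<noteq> b" by blast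
  have "{a, b, c} \<subseteq> ?N" using assms(3,4,6,7) c by simp
  moreover have "card {a, b, c} = card ?N" using assms(2,5) c by (simp add: degree_def)
  ultimately have "{a, b, c} = ?N" using assms(1) by (intro card_subset_eq) auto
  then show ?thesis using that c by blast
qed

lemma induced_cycle_walk:
  assumes ic: "induced_cycle V E cyc" and vc: "v \<in> set cyc"
  defines "p \<equiv> length cyc"
  obtains w where "w 0 = v" "inj_on w {..<p}" "w ` {..<p} = set cyc"
    "\<And>i. i < p \<Longrightarrow> E (w i) (w (Suc i mod p))"
    "\<And>\<psi>. cycle_gain \<psi> cyc = (\<Prod>i<p. \<psi> (w i) (w (Suc i mod p)))"
proof -
  have dist: "distinct cyc" and edg: "\<forall>i<p. E (cyc ! i) (cyc ! ((i + 1) mod p))"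
    using ic by (auto simp: induced_cycle_def p_def)
  obtain k0 where k0: "k0 < p" "cyc ! k0 = v" using vc by (auto simp: in_set_conv_nth p_def)
  define rot where "rot = (\<lambda>i. (k0 + i) mod p)"
  define w where "w = (\<lambda>i. cyc ! rot i)"
  have bij: "bij_betw rot {..<p} {..<p}" unfolding rot_def by (rule bij_betw_add_mod[OF k0(1)])
  have injn: "inj_on (nth cyc) {..<p}" using dist by (intro inj_on_nth) (auto simp: p_def)
  have "inj_on w {..<p}" unfolding w_def
    using comp_inj_on[of rot "{..<p}" "nth cyc"] bij injn by (simp add: bij_betw_def o_def)
  moreover have "w ` {..<p} = set cyc"
  proof -
    have "w ` {..<p} = nth cyc ` (rot ` {..<p})" unfolding w_def by (simp add: image_image)
    also have "rot ` {..<p} = {..<p}" using bij by (simp add: bij_betw_def)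
    finally show ?thesis by (auto simp: set_conv_nth p_def)
  qed
  moreover have wnext: "w (Suc i mod p) = cyc ! ((rot i + 1) mod p)" for i
    unfolding w_def rot_def by (simp add: mod_add_left_eq mod_add_right_eq mod_Suc_eq)
  moreover have "E (w i) (w (Suc i mod p))" if "i < p" for i
    using edg wnext k0(1) by (simp add: w_def rot_def)
  moreover have "cycle_gain \<psi> cyc = (\<Prod>i<p. \<psi> (w i) (w (Suc i mod p)))" for \<psi>
  proof -
    define f where "f = (\<lambda>j. \<psi> (cyc ! j) (cyc ! ((j + 1) mod p)))"
    have "(\<Prod>i<p. \<psi> (w i) (w (Suc i mod p))) = (\<Prod>i<p. f (rot i))"
      unfolding f_def wnext by (simp add: w_def)
    also have "\<dots> = (\<Prod>j<p. f j)" by (rule prod.reindex_bij_betw[OF bij])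
    finally show ?thesis by (simp add: cycle_gain_def f_def p_def)
  qed
  moreover have "w 0 = v" using k0 by (simp add: w_def rot_def)
  ultimately show ?thesis using that by blast
qed

locale pendant_cycle_walk =
  fixes V :: "'a set" and E :: "'a \<Rightarrow> 'a \<Rightarrow> bool"
    and w :: "nat \<Rightarrow> 'a" and p :: nat and v :: 'a and u :: 'a
  assumes sg: "simple_graph V E"
    and p3: "p \<ge> 3" and w0: "w 0 = v"
    and winj: "inj_on w {..<p}" and wV: "\<And>i. i < p \<Longrightarrow> w i \<in> V"
    and uV: "u \<in> V" and ucyc: "u \<notin> w ` {..<p}"
    and nbw: "\<And>i j. 0 < i \<Longrightarrow> i < p \<Longrightarrow> j \<in> V \<Longrightarrow> E (w i) j \<longleftrightarrow> j = w (i - 1) \<or> j = w (Suc i mod p)"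
    and nbv: "\<And>j. j \<in> V \<Longrightarrow> E v j \<longleftrightarrow> j = w 1 \<or> j = w (p - 1) \<or> j = u"
begin

definition F :: "'a set" where "F = V - w ` {..<p}"
definition H :: "'a set" where "H = insert v F"

text \<open>\<open>Sk k\<close> is what remains after the first \<open>k\<close> pairs \<open>w 1, w 2, ..., w (2*k)\<close> of cycle
  vertices following \<open>v\<close> have been contracted away.\<close>
definition loop_at_v :: "('a \<Rightarrow> 'a \<Rightarrow> complex) \<Rightarrow> complex \<Rightarrow> 'a \<Rightarrow> 'a \<Rightarrow> complex" where
  "loop_at_v N d = (\<lambda>i j. N i j + (if i = v \<and> j = v then d else 0))"

definition Sk :: "nat \<Rightarrow> 'a set" where "Sk k = V - w ` {1..2*k}"

lemma finite_V: "finite V" using sg by (simp add: simple_graph_def)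
lemma sym: "\<forall>a b. E a b \<longrightarrow> E b a" using sg by (simp add: simple_graph_def)
lemma irr: "\<forall>a. \<not> E a a" using sg by (simp add: simple_graph_def)

lemma w_eq_iff: "i < p \<Longrightarrow> j < p \<Longrightarrow> w i = w j \<longleftrightarrow> i = j"
  using winj by (auto dest: inj_onD)

lemma vV: "v \<in> V" using wV[of 0] p3 w0 by simp

lemma E_next: "i < p \<Longrightarrow> E (w i) (w (Suc i mod p))"
proof (cases "i = 0")
  case True
  then show ?thesis using nbv[of "w 1"] wV[of 1] p3 w0 by simp
next
  case False
  assume "i < p"
  then show ?thesis using nbw[of i "w (Suc i mod p)"] wV[of "Suc i mod p"] p3 False by simp
qed

lemma w_in_image_iff: "j < p \<Longrightarrow> A \<subseteq> {..<p} \<Longrightarrow> w j \<in> w ` A \<longleftrightarrow> j \<in> A"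
proof
  assume "j < p" "A \<subseteq> {..<p}" "w j \<in> w ` A"
  then obtain i where "i \<in> A" "w j = w i" by auto
  then show "j \<in> A" using \<open>j < p\<close> \<open>A \<subseteq> {..<p}\<close> w_eq_iff by auto
qed auto

lemma w_split: "w ` {..<p} = insert v (w ` {1..p - 1})"
proof -
  have "{..<p} = insert 0 {1..p - 1}" using p3 by auto
  then show ?thesis using w0 by simp
qed

lemma v_notin: "v \<notin> w ` {1..p - 1}"
proof
  assume "v \<in> w ` {1..p - 1}"
  then obtain x where x: "x \<in> {1..p - 1}" "v = w x" by auto
  then have "x < p" using p3 by auto
  then have "x = 0" using w_eq_iff[of 0 x] x(2) w0 p3 by simp
  then show False using x(1) by simp
qed

lemma F_subset: "F \<subseteq> V" unfolding F_def by auto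
lemma v_notin_F: "v \<notin> F" using w_split by (auto simp: F_def)
lemma u_in_F: "u \<in> F" using uV ucyc by (simp add: F_def)
lemma finite_F: "finite F" using finite_V F_subset finite_subset by blast
lemma finite_H: "finite H" using finite_F by (simp add: H_def)
lemma H_delete_v: "H - {v} = F" using v_notin_F by (auto simp: H_def)

lemma V_minus_path: "V - w ` {1..p - 1} = H"
  unfolding H_def F_def w_split using vV v_notin by auto

lemma not_adjacent_v_F: "j \<in> F \<Longrightarrow> j \<noteq> u \<Longrightarrow> \<not> E v j"
  using nbv[of j] wV[of 1] wV[of "p - 1"] p3 by (auto simp: F_def)

lemma not_adjacent_F_v: "j \<in> F \<Longrightarrow> j \<noteq> u \<Longrightarrow> \<not> E j v"
  using not_adjacent_v_F sym by blast

lemma adjacent_v_u: "E v u"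
  using nbv uV by blast

lemma w_in_Sk: "j < p \<Longrightarrow> 2*k < p \<Longrightarrow> w j \<in> Sk k \<longleftrightarrow> j = 0 \<or> 2*k < j"
proof -
  assume j: "j < p" and k: "2*k < p"
  have sub: "{1..2*k} \<subseteq> {..<p}" using k by auto
  show ?thesis unfolding Sk_def using w_in_image_iff[OF j sub] wV[OF j] by auto
qed

lemma v_in_Sk: "2*k < p \<Longrightarrow> v \<in> Sk k"
  using w_in_Sk[of 0 k] p3 w0 by simp

lemma Sk_subset: "Sk k \<subseteq> V" unfolding Sk_def by auto

lemma finite_Sk: "finite (Sk k)" using finite_subset[OF Sk_subset finite_V] .

lemma Sk_Suc: "2*k+2 < p \<Longrightarrow> Sk (Suc k) = Sk k - {w (2*k+1), w (2*k+2)}"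
proof -
  have "{1..2 * Suc k} = {1..2*k} \<union> {2*k+1, 2*k+2}" by auto
  then show ?thesis unfolding Sk_def by auto
qed

lemma nbrs_first_in_Sk:
  assumes k: "2*k+2 < p" and j: "j \<in> Sk k" "E (w (2*k+1)) j"
  shows "j = v \<or> j = w (2*k+2)"
proof -
  have "j = w (2*k) \<or> j = w (2*k+2)"
    using nbw[of "2*k+1" j] j Sk_subset k by auto
  moreover have "w (2*k) = v \<or> w (2*k) \<notin> Sk k"
    using w_in_Sk[of "2*k" k] k w0 by (cases k) auto
  ultimately show ?thesis using j(1) by auto
qed

lemma nbrs_second_in_Sk:
  assumes k: "2*k+2 < p" and j: "j \<in> Sk k" "E (w (2*k+2)) j"
  shows "j = w (2*k+1) \<or> j = w ((2*k+3) mod p)"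
  using nbw[of "2*k+2" j] j Sk_subset k by (auto simp: numeral_3_eq_3)

lemma even_cycle_half:
  assumes "even p"
  obtains m where "p = 2*m+2" "1 \<le> m" "p div 2 - 1 = m"
proof -
  have "p = 2 * (p div 2 - 1) + 2" "1 \<le> p div 2 - 1" using assms p3 by presburger+
  then show ?thesis using that by simp
qed

lemma last_in_Sk: "even p \<Longrightarrow> w (p - 1) \<in> Sk (p div 2 - 1)"
  by (elim even_cycle_half) (use w_in_Sk[of "p - 1"] in simp)

lemma Sk_last_delete: "even p \<Longrightarrow> Sk (p div 2 - 1) - {w (p - 1)} = H"
proof (elim even_cycle_half)
  fix m assume m: "p = 2*m+2" "p div 2 - 1 = m"
  have "{1..p - 1} = insert (p - 1) {1..2*m}" using m by auto
  then show "Sk (p div 2 - 1) - {w (p - 1)} = H"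
    using V_minus_path m(2) by (auto simp: Sk_def)
qed

lemma nbrs_last_in_Sk:
  assumes "even p" and j: "j \<in> Sk (p div 2 - 1)" "E (w (p - 1)) j"
  shows "j = v"
proof -
  have "j = w (p - 2) \<or> j = w 0"
    using nbw[of "p - 1" j] j Sk_subset p3 by (auto simp: Suc_diff_Suc numeral_2_eq_2)
  moreover have "w (p - 2) \<notin> Sk (p div 2 - 1)"
    using assms(1) by (elim even_cycle_half) (use w_in_Sk[of "p - 2"] in simp)
  ultimately show ?thesis using j(1) w0 by auto
qed

end

lemma pendant_cycle_walk_exists:
  assumes sg: "simple_graph V E" and pc: "pendant_cycle V E cyc v"
  defines "p \<equiv> length cyc"
  obtains w u where "pendant_cycle_walk V E w p v u" "w ` {..<p} = set cyc"
    "\<And>\<psi>. cycle_gain \<psi> cyc = (\<Prod>i<p. \<psi> (w i) (w (Suc i mod p)))"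
proof -
  have ic: "induced_cycle V E cyc" and vc: "v \<in> set cyc" and dv: "degree V E v = 3"
    and dx: "\<forall>x\<in>set cyc - {v}. degree V E x = 2" using pc by (auto simp: pendant_cycle_def)
  have p3: "p \<ge> 3" and cV: "set cyc \<subseteq> V" using ic by (auto simp: induced_cycle_def p_def)
  have sym: "\<forall>a b. E a b \<longrightarrow> E b a" and fin: "finite V" using sg by (auto simp: simple_graph_def)
  obtain w where w0: "w 0 = v" and winj: "inj_on w {..<p}" and wim: "w ` {..<p} = set cyc"
    and E_next: "\<And>i. i < p \<Longrightarrow> E (w i) (w (Suc i mod p))"
    and cg: "\<And>\<psi>. cycle_gain \<psi> cyc = (\<Prod>i<p. \<psi> (w i) (w (Suc i mod p)))"
    using induced_cycle_walk[OF ic vc] unfolding p_def by blast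
  have wV: "w i \<in> V" if "i < p" for i using wim cV that by auto
  have w_eq_iff: "i < p \<Longrightarrow> j < p \<Longrightarrow> w i = w j \<longleftrightarrow> i = j" for i j using winj by (auto dest: inj_onD)
  have E_prev: "E (w i) (w (i - 1))" if "0 < i" "i < p" for i
    using E_next[of "i - 1"] that sym by simp
  have nbw: "E (w i) j \<longleftrightarrow> j = w (i - 1) \<or> j = w (Suc i mod p)"
    if i: "0 < i" "i < p" and j: "j \<in> V" for i j
  proof -
    have "i - 1 \<noteq> Suc i mod p"
    proof (cases "Suc i < p")
      case False
      then have "Suc i = p" using i by simp
      then show ?thesis using p3 i by simp
    qed simp
    then have "w (i - 1) \<noteq> w (Suc i mod p)" using w_eq_iff[of "i - 1" "Suc i mod p"] i p3 by simp
    moreover have "degree V E (w i) = 2" using dx wim w_eq_iff[of i 0] i w0 by auto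
    ultimately show ?thesis
      using degree_2_nbrs[of V E "w i" "w (i - 1)" "w (Suc i mod p)" j] fin wV E_prev[OF i]
        E_next[OF i(2)] i j p3 by auto
  qed
  have p1: "p - 1 < p" "1 < p" using p3 by auto
  have ev1: "E v (w 1)" using E_next[of 0] p3 w0 by simp
  have evp: "E v (w (p - 1))" using E_next[OF p1(1)] w0 sym p3 by simp
  have n1p: "w 1 \<noteq> w (p - 1)" using w_eq_iff[OF p1(2) p1(1)] p3 by simp
  obtain u where u: "u \<in> V" "u \<noteq> w 1" "u \<noteq> w (p - 1)"
    and nbv: "\<And>j. j \<in> V \<Longrightarrow> E v j \<longleftrightarrow> j = w 1 \<or> j = w (p - 1) \<or> j = u"
    using degree_3_nbrs[OF fin dv wV[OF p1(2)] wV[OF p1(1)] n1p ev1 evp] by blast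
  have "u \<notin> set cyc"
  proof
    assume uc: "u \<in> set cyc"
    have "finite (set cyc)" "degree (set cyc) E v = 2" "w 1 \<in> set cyc" "w (p - 1) \<in> set cyc"
      using ic vc wim p1 by (auto simp: induced_cycle_def)
    then have "E v u \<longleftrightarrow> u = w 1 \<or> u = w (p - 1)"
      using degree_2_nbrs[of "set cyc" E v "w 1" "w (p - 1)" u] n1p ev1 evp uc by blast
    then show False using nbv[OF u(1)] u by blast
  qed
  then have "pendant_cycle_walk V E w p v u"
    using sg p3 w0 winj wV u(1) wim nbw nbv by unfold_locales auto
  then show ?thesis using that wim cg by blast
qed

locale gain_pendant_cycle_walk = pendant_cycle_walk +
  fixes \<psi> :: "'a \<Rightarrow> 'a \<Rightarrow> complex"
  assumes ug: "unit_gain E \<psi>"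
begin

definition M :: "'a \<Rightarrow> 'a \<Rightarrow> complex" where "M = gain_adj_mat E \<psi>"
definition g :: "nat \<Rightarrow> complex" where "g i = \<psi> (w i) (w (Suc i mod p))"

text \<open>Contracting the path \<open>v, w 1, ..., w (2*k+1)\<close> two vertices at a time leaves \<open>M\<close> unchanged
  except that the edge \<open>v w (2*k+1)\<close> now carries the gain \<open>gam k\<close>; \<open>Nk k\<close> is the result of one
  further contraction, before it is recognised as \<open>Mk (Suc k)\<close>.\<close>
definition gam :: "nat \<Rightarrow> complex" where "gam k = (-1) ^ k * (\<Prod>i\<in>{..2*k}. g i)"
definition Mk :: "nat \<Rightarrow> 'a \<Rightarrow> 'a \<Rightarrow> complex" where
  "Mk k = (\<lambda>i j. if i = v \<and> j = w (2*k+1) then gam k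
    else if i = w (2*k+1) \<and> j = v then cnj (gam k) else M i j)"
definition Nk :: "nat \<Rightarrow> 'a \<Rightarrow> 'a \<Rightarrow> complex" where
  "Nk k = (\<lambda>i j. M i j + (if i = v \<and> j = w ((2*k+3) mod p) then gam (Suc k) else 0)
    + (if i = w ((2*k+3) mod p) \<and> j = v then cnj (gam (Suc k)) else 0))"

lemma M_nz: "M a b \<noteq> 0 \<longleftrightarrow> E a b"
  unfolding M_def by (rule gain_adj_mat_nonzero_iff[OF ug])

lemma M_herm: "M b a = cnj (M a b)"
  using ug sym unfolding M_def gain_adj_mat_def unit_gain_def
  by (metis complex_cnj_cnj complex_cnj_zero)

lemma g_unit: "i < p \<Longrightarrow> cmod (g i) = 1"
  using E_next ug unfolding unit_gain_def g_def by blast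

lemma M_next: "i < p \<Longrightarrow> M (w i) (w (Suc i mod p)) = g i"
  using E_next by (simp add: M_def gain_adj_mat_def g_def)

lemma M_prev: "i < p \<Longrightarrow> M (w (Suc i mod p)) (w i) = cnj (g i)"
  using M_next M_herm by metis

lemma gam_Suc: "gam (Suc k) = - gam k * g (2*k+1) * g (2*k+2)"
proof -
  have "{..2 * Suc k} = insert (2*k+2) (insert (2*k+1) {..2*k})" by auto
  then have "(\<Prod>i\<in>{..2 * Suc k}. g i) = g (2*k+2) * (g (2*k+1) * (\<Prod>i\<in>{..2*k}. g i))" by simp
  then show ?thesis unfolding gam_def by (simp add: algebra_simps)
qed

lemma Mk0: "Mk 0 = M"
proof (intro ext)
  fix i j
  have "M v (w 1) = g 0" using M_next[of 0] p3 w0 by simp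
  moreover have "M (w 1) v = cnj (g 0)" using M_prev[of 0] p3 w0 by simp
  ultimately show "Mk 0 i j = M i j" by (auto simp: Mk_def gam_def)
qed

lemma rank_Mk_contract:
  assumes k: "2*k+2 < p"
  shows "submatrix_rank (Sk k) (Sk k) (Mk k) = submatrix_rank (Sk (Suc k)) (Sk (Suc k)) (Nk k) + 2"
proof -
  define x where "x = w (2*k+1)"
  define y where "y = w (2*k+2)"
  define c where "c = (2*k+3) mod p"
  define z where "z = w c"
  have ap: "2*k+1 < p" "2*k+2 < p" using k by auto
  have cp: "c < p" using p3 by (simp add: c_def)
  have c_val: "c = (if 2*k+3 < p then 2*k+3 else 0)"
  proof (cases "2*k+3 < p")
    case False
    then have "2*k+3 = p" using k by simp
    then show ?thesis by (simp add: c_def)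
  qed (simp add: c_def)
  have k2: "2*k < p" using k by simp
  have xS: "x \<in> Sk k" using w_in_Sk[OF ap(1) k2] by (simp add: x_def)
  have yS: "y \<in> Sk k" using w_in_Sk[OF ap(2) k2] by (simp add: y_def)
  have zS: "z \<in> Sk k" using w_in_Sk[OF cp k2] c_val by (auto simp: z_def)
  have vS: "v \<in> Sk k" by (rule v_in_Sk[OF k2])
  have xy: "x \<noteq> y" using w_eq_iff[OF ap(1) ap(2)] by (simp add: x_def y_def)
  have vx: "v \<noteq> x" using w_eq_iff[of 0 "2*k+1"] ap w0 by (simp add: x_def)
  have vy: "v \<noteq> y" using w_eq_iff[of 0 "2*k+2"] ap w0 by (simp add: y_def)
  have zx: "z \<noteq> x" using w_eq_iff[OF cp ap(1)] c_val by (auto simp: z_def x_def)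
  have zy: "z \<noteq> y" using w_eq_iff[OF cp ap(2)] c_val by (auto simp: z_def y_def)
  have Mxy: "M x y = g (2*k+1)" using M_next[OF ap(1)] ap by (simp add: x_def y_def)
  have Myx: "M y x = cnj (g (2*k+1))" using M_prev[OF ap(1)] ap by (simp add: x_def y_def)
  have Myz: "M y z = g (2*k+2)" using M_next[OF ap(2)] by (simp add: y_def z_def c_def numeral_3_eq_3)
  have Mzy: "M z y = cnj (g (2*k+2))" using M_prev[OF ap(2)] by (simp add: y_def z_def c_def numeral_3_eq_3)
  have g_unit_x: "cmod (g (2*k+1)) = 1" using g_unit ap by auto
  have Mk_eq: "Mk k i j = M i j" if "i \<noteq> x" "j \<noteq> x" for i j
    using that by (simp add: Mk_def x_def)
  have Mk_vx: "Mk k v x = gam k" by (simp add: Mk_def x_def)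
  have Mk_xv: "Mk k x v = cnj (gam k)" using vx by (simp add: Mk_def x_def)
  have Mk_y: "Mk k y j = M y j" "Mk k j y = M j y" for j using xy vy by (auto simp: Mk_def x_def y_def)
  have rowx: "\<forall>j\<in>Sk k. Mk k x j \<noteq> 0 \<longrightarrow> j = v \<or> j = y"
    using nbrs_first_in_Sk[OF k] M_nz vx by (auto simp: Mk_def x_def y_def)
  have colx: "\<forall>i\<in>Sk k. Mk k i x \<noteq> 0 \<longrightarrow> i = v \<or> i = y"
    using nbrs_first_in_Sk[OF k] M_nz sym vx by (auto simp: Mk_def x_def y_def) blast
  have nb_y: "j = x \<or> j = z" if "j \<in> Sk k" "E y j" for j
    using nbrs_second_in_Sk[OF k] that by (simp add: x_def y_def z_def c_def)
  have rowy: "\<forall>j\<in>Sk k. Mk k y j \<noteq> 0 \<longrightarrow> j = x \<or> j = z"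
  proof (intro ballI impI)
    fix j assume j: "j \<in> Sk k" "Mk k y j \<noteq> 0"
    then have "E y j" by (simp only: Mk_y M_nz)
    then show "j = x \<or> j = z" by (rule nb_y[OF j(1)])
  qed
  have coly: "\<forall>i\<in>Sk k. Mk k i y \<noteq> 0 \<longrightarrow> i = x \<or> i = z"
  proof (intro ballI impI)
    fix i assume i: "i \<in> Sk k" "Mk k i y \<noteq> 0"
    then have "E i y" by (simp only: Mk_y M_nz)
    then show "i = x \<or> i = z" using sym nb_y[OF i(1)] by blast
  qed
  have nz: "Mk k y x \<noteq> 0" "Mk k x y \<noteq> 0"
    using Myx Mxy g_unit_x by (auto simp: Mk_y)
  have SS: "Sk k - {x, y} = Sk (Suc k)" using Sk_Suc[OF k] by (simp add: x_def y_def)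
  have new_vz: "- (Mk k v x * Mk k y z / Mk k y x) = gam (Suc k)"
    using Mk_vx Mk_y Myz Myx divide_cnj_unit[OF g_unit_x] gam_Suc by (simp add: algebra_simps)
  have new_zv: "- (Mk k z y * Mk k x v / Mk k x y) = cnj (gam (Suc k))"
    using Mk_xv Mk_y Mzy Mxy divide_unit[OF g_unit_x] gam_Suc by (simp add: algebra_simps)
  have "submatrix_rank (Sk k) (Sk k) (Mk k)
      = submatrix_rank (Sk (Suc k)) (Sk (Suc k)) (contract_mat (Mk k) x y v z) + 2"
    using principal_rank_contract[OF finite_Sk xS yS vS zS xy vx vy zx zy nz colx rowy rowx coly] SS
    by simp
  also have "submatrix_rank (Sk (Suc k)) (Sk (Suc k)) (contract_mat (Mk k) x y v z)
      = submatrix_rank (Sk (Suc k)) (Sk (Suc k)) (Nk k)"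
  proof (rule submatrix_rank_cong, intro ballI)
    fix i j assume "i \<in> Sk (Suc k)" "j \<in> Sk (Suc k)"
    then have ij: "i \<noteq> x" "j \<noteq> x" using SS by auto
    show "contract_mat (Mk k) x y v z i j = Nk k i j"
      unfolding contract_mat_def Nk_def new_vz new_zv Mk_eq[OF ij] z_def[unfolded c_def, symmetric]
      by simp
  qed
  finally show ?thesis .
qed

lemma rank_M_eq_rank_Mk: "2*k+2 < p \<Longrightarrow> submatrix_rank V V M = submatrix_rank (Sk k) (Sk k) (Mk k) + 2*k"
proof (induction k)
  case 0
  have "Sk 0 = V" by (simp add: Sk_def)
  then show ?case using Mk0 by simp
next
  case (Suc k)
  have k: "2*k+2 < p" using Suc.prems by simp
  have IH: "submatrix_rank V V M = submatrix_rank (Sk k) (Sk k) (Mk k) + 2*k" using Suc.IH k by simp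
  define z where "z = w (2*k+3)"
  have zmod: "(2*k+3) mod p = 2*k+3" using Suc.prems by simp
  have z3: "2*k+3 < p" using Suc.prems by simp
  have nE: "\<not> E v z"
  proof
    assume "E v z"
    moreover have "z \<in> V" using wV[OF z3] by (simp add: z_def)
    ultimately have "z = w 1 \<or> z = w (p - 1) \<or> z = u" using nbv by blast
    moreover have "z \<noteq> w 1" using w_eq_iff[OF z3, of 1] p3 by (simp add: z_def)
    moreover have "z \<noteq> w (p - 1)" using w_eq_iff[OF z3, of "p - 1"] Suc.prems by (simp add: z_def)
    moreover have "z \<noteq> u" using ucyc z3 by (auto simp: z_def)
    ultimately show False by blast
  qed
  have Mvz: "M v z = 0" "M z v = 0" using nE sym M_nz by blast+
  have vz: "v \<noteq> z" using w_eq_iff[OF z3, of 0] p3 w0 by (simp add: z_def)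
  have "Nk k = Mk (Suc k)"
  proof (intro ext)
    fix i j
    have e: "2 * Suc k + 1 = 2*k+3" by simp
    show "Nk k i j = Mk (Suc k) i j"
      unfolding Nk_def Mk_def zmod e z_def[symmetric] using Mvz vz by auto
  qed
  then show ?case using IH rank_Mk_contract[OF k] by simp
qed

lemma gam_last_eq_zero_iff:
  assumes "even p"
  shows "cnj (g (p - 1)) + gam (p div 2 - 1) = 0 \<longleftrightarrow> (\<Prod>i<p. g i) = (-1) ^ (p div 2)"
proof -
  obtain m where m: "p = 2*m+2" "p div 2 - 1 = m" using assms by (elim even_cycle_half)
  define s :: complex where "s = (-1) ^ m"
  define Q where "Q = (\<Prod>i\<in>{..2*m}. g i)"
  have "{..<p} = insert (p - 1) {..2*m}" using m by auto
  then have prod: "(\<Prod>i<p. g i) = Q * g (p - 1)" using m by (simp add: Q_def mult.commute)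
  have "s * s = 1" unfolding s_def by (simp add: power_mult_distrib[symmetric])
  moreover have "gam (p div 2 - 1) = s * Q" unfolding gam_def s_def Q_def m(2) ..
  moreover have "(-1::complex) ^ (p div 2) = - s" using m by (simp add: s_def)
  ultimately show ?thesis using unit_cnj_add_eq_zero_iff[OF g_unit] prod p3 by simp
qed

definition odd_loop :: complex where
  "odd_loop = (-1) ^ ((p - 1) div 2) * (\<Prod>i<p. g i) + cnj ((-1) ^ ((p - 1) div 2) * (\<Prod>i<p. g i))"

lemma rank_M_odd_cycle:
  assumes "odd p"
  shows "submatrix_rank V V M = (p - 1) + submatrix_rank H H (loop_at_v M odd_loop)"
proof -
  define m where "m = (p - 3) div 2"
  have m: "p = 2*m+3" using assms p3 unfolding m_def by presburger
  have k: "2*m+2 < p" using m by simp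
  have r1: "submatrix_rank V V M = submatrix_rank (Sk (Suc m)) (Sk (Suc m)) (Nk m) + 2 + 2*m"
    using rank_M_eq_rank_Mk[OF k] rank_Mk_contract[OF k] by simp
  have "Sk (Suc m) = V - w ` {1..p - 1}" unfolding Sk_def using m by simp
  then have SH: "Sk (Suc m) = H" using V_minus_path by simp
  have z: "w ((2*m+3) mod p) = v" using m w0 by simp
  have gg: "gam (Suc m) = (-1) ^ ((p - 1) div 2) * (\<Prod>i<p. g i)"
  proof -
    have "{..2 * Suc m} = {..<p}" using m by auto
    moreover have "(p - 1) div 2 = Suc m" using m by simp
    ultimately show ?thesis unfolding gam_def by simp
  qed
  have "Nk m = loop_at_v M odd_loop"
    unfolding Nk_def loop_at_v_def odd_loop_def z gg by (intro ext) auto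
  then show ?thesis using r1 SH m by simp
qed

lemma rank_M_even_cycle:
  assumes ev: "even p"
  shows "submatrix_rank V V M = (p - 2) + (if (\<Prod>i<p. g i) = (-1) ^ (p div 2)
      then submatrix_rank H H M else submatrix_rank F F M + 2)"
proof -
  obtain m where m: "p = 2*m+2" "1 \<le> m" "p div 2 - 1 = m" using ev by (elim even_cycle_half)
  define k where "k = m - 1"
  have k: "2*k+2 < p" and mk: "Suc k = m" using m by (auto simp: k_def)
  have r1: "submatrix_rank V V M = submatrix_rank (Sk m) (Sk m) (Nk k) + 2 + 2*k"
    using rank_M_eq_rank_Mk[OF k] rank_Mk_contract[OF k] mk by simp
  define z where "z = w (p - 1)"
  have "2*k+3 = p - 1" using m mk by arith
  then have zmod: "w ((2*k+3) mod p) = z" using p3 by (simp add: z_def)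
  define N where "N = Nk k"
  define \<omega> where "\<omega> = cnj (g (p - 1)) + gam m"
  have p1: "p - 1 < p" using p3 by auto
  have vz: "v \<noteq> z" using w_eq_iff[OF p1, of 0] p3 w0 by (simp add: z_def)
  have Nvz: "N v z = \<omega>" using vz M_prev[OF p1] p3 w0 by (simp add: N_def Nk_def zmod \<omega>_def mk z_def)
  have Nzv: "N z v = cnj \<omega>" using vz M_next[OF p1] p3 w0 by (simp add: N_def Nk_def zmod \<omega>_def mk z_def)
  have Nother: "N i j = M i j" if "i \<noteq> z" "j \<noteq> z" for i j
    using that by (simp add: N_def Nk_def zmod)
  have zS: "z \<in> Sk m" and vS: "v \<in> Sk m" using last_in_Sk[OF ev] v_in_Sk[of m] m by (auto simp: z_def)
  have nbz: "\<not> E z j" "\<not> E j z" if "j \<in> Sk m" "j \<noteq> v" for j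
    using that nbrs_last_in_Sk[OF ev, of j] sym m(3) by (auto simp: z_def)
  have rowz: "N z j = 0" and colz: "N j z = 0" if "j \<in> Sk m" "j \<noteq> v" for j
    using nbz[OF that] M_nz that(2) vz by (auto simp: N_def Nk_def zmod)
  have Sz: "Sk m - {z} = H" using Sk_last_delete[OF ev] m(3) by (simp add: z_def)
  have Szv: "Sk m - {z, v} = F" using Sz H_delete_v by auto
  have eqw: "\<omega> = 0 \<longleftrightarrow> (\<Prod>i<p. g i) = (-1) ^ (p div 2)"
    using gam_last_eq_zero_iff[OF ev] m(3) by (simp add: \<omega>_def)
  have N_F: "submatrix_rank S S N = submatrix_rank S S M" if "S \<subseteq> H" for S
    using Sz that Nother by (intro submatrix_rank_cong) blast
  have p_k: "p - 2 = 2 + 2*k" using m mk by arith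
  show ?thesis
  proof (cases "\<omega> = 0")
    case True
    have "submatrix_rank (Sk m) (Sk m) N = submatrix_rank (Sk m - {z}) (Sk m - {z}) N"
      using rowz colz Nzv Nvz True by (intro principal_rank_isolated[OF finite_Sk]) auto
    also have "\<dots> = submatrix_rank H H M" using Sz N_F[of H] by simp
    finally show ?thesis using r1 True eqw p_k by (simp add: N_def)
  next
    case False
    have "submatrix_rank (Sk m) (Sk m) N = submatrix_rank (Sk m - {z, v}) (Sk m - {z, v}) N + 2"
      using zS vS vz False Nvz Nzv rowz colz by (intro principal_rank_pendant[OF finite_Sk]) auto
    also have "\<dots> = submatrix_rank F F M + 2" using Szv N_F[of F] H_delete_v by auto
    finally show ?thesis using r1 False eqw p_k by (simp add: N_def)
  qed
qed

end

lemma graph_rank_eq_submatrix_rank: "graph_rank S E = submatrix_rank S S (adj_mat E)"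
  by (simp add: graph_rank_def mat_rank_eq_submatrix_rank)

lemma gain_rank_eq_submatrix_rank: "gain_rank S E \<phi> = submatrix_rank S S (gain_adj_mat E \<phi>)"
  by (simp add: gain_rank_def mat_rank_eq_submatrix_rank)

lemma unit_gain_one: "unit_gain E (\<lambda>_ _. 1)"
  by (simp add: unit_gain_def)

lemma gain_adj_mat_one: "gain_adj_mat E (\<lambda>_ _. 1) = adj_mat E"
  by (intro ext) (simp add: gain_adj_mat_def adj_mat_def)

lemma graph_rank_le_gain_rank_add_theta:
  assumes sg: "simple_graph V E" and ug: "unit_gain E \<phi>" and S: "S \<subseteq> V"
  shows "int (graph_rank S E) \<le> int (gain_rank S E \<phi>) + 2 * theta S E"
proof -
  have "finite S" using sg S finite_subset by (auto simp: simple_graph_def)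
  then show ?thesis
    using rank_le_rank_add_theta[of E S "adj_mat E" "gain_adj_mat E \<phi>"] sg
      gain_adj_mat_nonzero_iff[OF ug]
    by (simp add: simple_graph_def adj_mat_def graph_rank_eq_submatrix_rank gain_rank_eq_submatrix_rank)
qed

context pendant_cycle_walk
begin

lemma reach_v_avoiding_w1:
  assumes "2 \<le> j" "j < p"
  shows "reach (V - {w 1}) E (w j) v"
proof -
  have edge: "reach (V - {w 1}) E (w n) (w (Suc n mod p))" if "2 \<le> n" "n < p" for n
  proof (rule reach_edge)
    have "Suc n mod p \<noteq> 1"
    proof (cases "Suc n < p")
      case False
      then have "Suc n = p" using that by simp
      then show ?thesis by simp
    qed (use that in simp)
    then show "w n \<in> V - {w 1}" "w (Suc n mod p) \<in> V - {w 1}"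
      using that wV w_eq_iff[of n 1] w_eq_iff[of "Suc n mod p" 1] p3 by auto
  qed (use E_next that in simp)
  have "j \<le> p - 1" using assms by simp
  then show ?thesis
  proof (induction j rule: inc_induct)
    case base
    then show ?case using edge[of "p - 1"] p3 w0 by simp
  next
    case (step n)
    have "reach (V - {w 1}) E (w n) (w (Suc n))" using edge[of n] step.hyps(1,2) assms(1) by simp
    then show ?case using step.IH by (rule reach_trans)
  qed
qed

lemma theta_F_lt_theta_V: "theta F E + 1 \<le> theta V E"
proof -
  have w1: "w 1 \<in> V" "1 < p" using wV p3 by auto
  have "E (w 1) (w (Suc 1 mod p))" using E_next[of 1] p3 by simp
  moreover have "Suc 1 mod p = 2" using p3 by simp
  ultimately have nbrs: "v \<in> nbrs V E (w 1)" "w 2 \<in> nbrs V E (w 1)"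
    using nbw[of 1 v] vV wV[of 2] w0 p3 by (auto simp: nbrs_def numeral_2_eq_2)
  have "v \<noteq> w 2" using w_eq_iff[of 0 2] p3 w0 by simp
  then have "theta (V - {w 1}) E \<le> theta V E - 1"
    using reach_sym[OF sym reach_v_avoiding_w1[of 2]] p3 nbrs
    by (intro theta_delete_cycle_vertex[OF sym w1(1) finite_V]) auto
  moreover have "theta F E \<le> theta (V - {w 1}) E"
    using w1 finite_V by (intro theta_mono[OF sym]) (auto simp: F_def)
  ultimately show ?thesis by linarith
qed

lemma nbrs_H_v: "nbrs H E v = {u}"
  using not_adjacent_v_F adjacent_v_u u_in_F irr by (auto simp: nbrs_def H_def)

lemma theta_H_le_theta_F: "theta H E \<le> theta F E"
  using theta_le_delete_pendant[OF sym irr _ finite_H nbrs_H_v] H_delete_v by (simp add: H_def)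

lemma rank_H_pendant:
  assumes supp: "\<And>i j. N i j \<noteq> 0 \<longleftrightarrow> E i j"
  shows "submatrix_rank H H N = submatrix_rank (F - {u}) (F - {u}) N + 2"
proof -
  have "H - {v, u} = F - {u}" using H_delete_v by auto
  moreover have "u \<noteq> v" using u_in_F v_notin_F by blast
  ultimately show ?thesis
    using adjacent_v_u not_adjacent_v_F not_adjacent_F_v supp sym irr u_in_F
    by (subst principal_rank_pendant[OF finite_H, of v u]) (auto simp: H_def)
qed

lemma rank_H_loop_at_v_pivot:
  assumes supp: "\<And>i j. N i j \<noteq> 0 \<longleftrightarrow> E i j" and d: "d \<noteq> 0"
  obtains N' where "\<forall>i\<in>F. \<forall>j\<in>F. (i, j) \<noteq> (u, u) \<longrightarrow> N' i j = N i j"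
    "submatrix_rank H H (loop_at_v N d) = submatrix_rank F F N' + 1"
proof -
  have "\<forall>j\<in>F. j \<noteq> u \<longrightarrow> loop_at_v N d v j = 0" "\<forall>i\<in>F. i \<noteq> u \<longrightarrow> loop_at_v N d i v = 0"
    using not_adjacent_v_F not_adjacent_F_v supp v_notin_F by (auto simp: loop_at_v_def)
  moreover have "N v v = 0" using supp irr by blast
  then have "loop_at_v N d v v \<noteq> 0" using d by (simp add: loop_at_v_def)
  ultimately obtain N' where N': "\<forall>i\<in>F. \<forall>j\<in>F. (i, j) \<noteq> (u, u) \<longrightarrow> N' i j = loop_at_v N d i j"
    "submatrix_rank H H (loop_at_v N d) = submatrix_rank F F N' + 1"
    using principal_rank_diag_pivot[OF finite_F v_notin_F u_in_F] unfolding H_def by blast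
  moreover have "\<forall>i\<in>F. \<forall>j\<in>F. loop_at_v N d i j = N i j"
    using v_notin_F by (auto simp: loop_at_v_def)
  ultimately show ?thesis using that[of N'] by simp
qed

lemma rank_H_loop_at_v_ge:
  assumes supp: "\<And>i j. N i j \<noteq> 0 \<longleftrightarrow> E i j"
  shows "submatrix_rank (F - {u}) (F - {u}) N + 1 \<le> submatrix_rank H H (loop_at_v N d)"
proof (cases "d = 0")
  case True
  then show ?thesis using rank_H_pendant[OF supp] by (simp add: loop_at_v_def)
next
  case False
  obtain N' where N': "\<forall>i\<in>F. \<forall>j\<in>F. (i, j) \<noteq> (u, u) \<longrightarrow> N' i j = N i j"
    "submatrix_rank H H (loop_at_v N d) = submatrix_rank F F N' + 1"
    by (rule rank_H_loop_at_v_pivot[OF supp False])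
  have "submatrix_rank (F - {u}) (F - {u}) N = submatrix_rank (F - {u}) (F - {u}) N'"
    using N'(1) by (intro submatrix_rank_cong) auto
  also have "\<dots> \<le> submatrix_rank F F N'" by (rule principal_rank_delete_vertex(2)[OF finite_F])
  finally show ?thesis using N'(2) by simp
qed

end

locale tight_pendant_cycle_walk = pendant_cycle_walk +
  fixes \<phi> :: "'a \<Rightarrow> 'a \<Rightarrow> complex"
  assumes ug: "unit_gain E \<phi>"
    and tight: "int (gain_rank V E \<phi>) = int (graph_rank V E) - 2 * theta V E"
begin

sublocale PF: gain_pendant_cycle_walk V E w p v u \<phi>
  by unfold_locales (rule ug)

sublocale PG: gain_pendant_cycle_walk V E w p v u "\<lambda>_ _. 1"
  by unfold_locales (rule unit_gain_one)

abbreviation MA :: "'a \<Rightarrow> 'a \<Rightarrow> complex" where "MA \<equiv> adj_mat E"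
abbreviation MB :: "'a \<Rightarrow> 'a \<Rightarrow> complex" where "MB \<equiv> gain_adj_mat E \<phi>"

lemma PF_M: "PF.M = MB" by (simp add: PF.M_def)
lemma PG_M: "PG.M = MA" by (simp add: PG.M_def gain_adj_mat_one)

lemma MA_nonzero_iff: "MA i j \<noteq> 0 \<longleftrightarrow> E i j" by (simp add: adj_mat_def)
lemma MB_nonzero_iff: "MB i j \<noteq> 0 \<longleftrightarrow> E i j" by (rule gain_adj_mat_nonzero_iff[OF ug])

lemma rank_lower_bound:
  "S \<subseteq> V \<Longrightarrow> int (submatrix_rank S S MA) \<le> int (submatrix_rank S S MB) + 2 * theta S E"
  using graph_rank_le_gain_rank_add_theta[OF sg ug]
  by (simp add: graph_rank_eq_submatrix_rank gain_rank_eq_submatrix_rank)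

lemma tight_submatrix_rank:
  "int (submatrix_rank V V MB) = int (submatrix_rank V V MA) - 2 * theta V E"
  using tight by (simp add: graph_rank_eq_submatrix_rank gain_rank_eq_submatrix_rank)

lemma PG_odd_loop_nonzero: "PG.odd_loop \<noteq> 0"
proof -
  have "(-1::complex) ^ ((p - 1) div 2) = 1 \<or> (-1::complex) ^ ((p - 1) div 2) = -1"
    by (cases "even ((p - 1) div 2)") (simp_all add: neg_one_even_power neg_one_odd_power)
  then show ?thesis by (auto simp: PG.odd_loop_def PG.g_def)
qed

text \<open>Equality in the lower bound forces equality in every inequality used to derive it.\<close>
lemma odd_cycle_rank_identities:
  assumes odd: "odd p"
  shows "submatrix_rank H H (loop_at_v MB PF.odd_loop) = submatrix_rank (F - {u}) (F - {u}) MB + 1"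
    and "submatrix_rank F F MA = submatrix_rank (F - {u}) (F - {u}) MA + 2"
    and "int (submatrix_rank (F - {u}) (F - {u}) MB)
        = int (submatrix_rank (F - {u}) (F - {u}) MA) - 2 * theta F E"
proof -
  obtain A' where A': "\<forall>i\<in>F. \<forall>j\<in>F. (i, j) \<noteq> (u, u) \<longrightarrow> A' i j = MA i j"
    "submatrix_rank H H (loop_at_v MA PG.odd_loop) = submatrix_rank F F A' + 1"
    using rank_H_loop_at_v_pivot[OF MA_nonzero_iff PG_odd_loop_nonzero] by blast
  have "submatrix_rank (F - {u}) (F - {u}) A' = submatrix_rank (F - {u}) (F - {u}) MA"
    using A'(1) by (intro submatrix_rank_cong) auto
  then have A'_le: "submatrix_rank F F A' \<le> submatrix_rank (F - {u}) (F - {u}) MA + 2"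
    using principal_rank_delete_vertex(1)[OF finite_F, of A' u] by simp
  have Fu_V: "F - {u} \<subseteq> V" using F_subset by blast
  note facts = A'_le A'(2) PF.rank_M_odd_cycle[OF odd, unfolded PF_M]
    PG.rank_M_odd_cycle[OF odd, unfolded PG_M] tight_submatrix_rank
    rank_H_loop_at_v_ge[OF MB_nonzero_iff, of PF.odd_loop]
    rank_lower_bound[OF Fu_V] theta_F_lt_theta_V theta_delete_vertex_mono[OF sym finite_F, of u]
  show "submatrix_rank H H (loop_at_v MB PF.odd_loop) = submatrix_rank (F - {u}) (F - {u}) MB + 1"
    and "int (submatrix_rank (F - {u}) (F - {u}) MB)
        = int (submatrix_rank (F - {u}) (F - {u}) MA) - 2 * theta F E"
    using facts by linarith+
  have A'_eq: "submatrix_rank F F A' = submatrix_rank (F - {u}) (F - {u}) MA + 2"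
    using facts by linarith
  have "\<forall>i\<in>F. \<forall>j\<in>F. MA i j = cnj (MA j i)" using sym by (auto simp: adj_mat_def)
  then show "submatrix_rank F F MA = submatrix_rank (F - {u}) (F - {u}) MA + 2"
    using hermitian_rank_jump_change_diag[OF finite_F u_in_F _ A'(1) A'_eq] by blast
qed

lemma even_cycle: "even p"
proof (rule ccontr)
  assume odd: "odd p"
  note ids = odd_cycle_rank_identities[OF odd]
  show False
  proof (cases "PF.odd_loop = 0")
    case True
    then show False using rank_H_pendant[OF MB_nonzero_iff] ids(1) by (simp add: loop_at_v_def)
  next
    case False
    obtain B' where B': "\<forall>i\<in>F. \<forall>j\<in>F. (i, j) \<noteq> (u, u) \<longrightarrow> B' i j = MB i j"
      "submatrix_rank H H (loop_at_v MB PF.odd_loop) = submatrix_rank F F B' + 1"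
      using rank_H_loop_at_v_pivot[OF MB_nonzero_iff False] by blast
    have "submatrix_rank F F MB \<le> submatrix_rank F F B' + 1"
      using B'(1) by (intro submatrix_rank_change_col[OF finite_F, where u = u]) auto
    then show False using B'(2) ids rank_lower_bound[OF F_subset] by linarith
  qed
qed

lemma type_A_gain: "(\<Prod>i<p. \<phi> (w i) (w (Suc i mod p))) = (-1) ^ (p div 2)"
  and not_A_trivial: "(1::complex) \<noteq> (-1) ^ (p div 2)"
  and rank_V_MB: "submatrix_rank V V MB = (p - 2) + submatrix_rank H H MB"
  and rank_V_MA: "submatrix_rank V V MA = (p - 2) + submatrix_rank F F MA + 2"
proof -
  have eF: "submatrix_rank V V MB = (p - 2) + (if (\<Prod>i<p. PF.g i) = (-1) ^ (p div 2)
      then submatrix_rank H H MB else submatrix_rank F F MB + 2)"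
    using PF.rank_M_even_cycle[OF even_cycle] by (simp add: PF_M)
  have eG: "submatrix_rank V V MA = (p - 2) + (if (1::complex) = (-1) ^ (p div 2)
      then submatrix_rank H H MA else submatrix_rank F F MA + 2)"
    using PG.rank_M_even_cycle[OF even_cycle] by (simp add: PG_M PG.g_def)
  have HV: "H \<subseteq> V" using F_subset vV by (auto simp: H_def)
  have F_le_H: "submatrix_rank F F N \<le> submatrix_rank H H N" for N
    using finite_H by (intro principal_rank_mono) (auto simp: H_def)
  have "submatrix_rank H H MA \<le> submatrix_rank F F MA + 2"
    using principal_rank_delete_vertex(1)[OF finite_H, of MA v] H_delete_v by simp
  note facts = this rank_lower_bound[OF F_subset] rank_lower_bound[OF HV] F_le_H[of MA] F_le_H[of MB]
    theta_F_lt_theta_V theta_H_le_theta_F tight_submatrix_rank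
  have A: "(\<Prod>i<p. PF.g i) = (-1) ^ (p div 2)"
  proof (rule ccontr)
    assume "(\<Prod>i<p. PF.g i) \<noteq> (-1) ^ (p div 2)"
    then show False using eF eG facts by (cases "(1::complex) = (-1) ^ (p div 2)") auto
  qed
  then show "(\<Prod>i<p. \<phi> (w i) (w (Suc i mod p))) = (-1) ^ (p div 2)" by (simp add: PF.g_def)
  show not_A1: "(1::complex) \<noteq> (-1) ^ (p div 2)"
  proof
    assume "(1::complex) = (-1) ^ (p div 2)"
    then show False using eF eG A facts by auto
  qed
  show "submatrix_rank V V MB = (p - 2) + submatrix_rank H H MB"
    and "submatrix_rank V V MA = (p - 2) + submatrix_rank F F MA + 2"
    using eF eG A not_A1 by simp_all
qed

lemma p_mod_4: "p mod 4 = 2"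
proof -
  have "odd (p div 2)" using not_A_trivial by (metis neg_one_even_power)
  then show ?thesis using even_cycle by presburger
qed

lemma rank_identities:
  "int (gain_rank H E \<phi>) = int (graph_rank H E) - 2 * theta H E"
  "int (gain_rank F E \<phi>) = int (graph_rank F E) - 2 * theta F E"
  "int (gain_rank V E \<phi>) = int p - 2 + int (gain_rank F E \<phi>)"
  "gain_rank F E \<phi> = gain_rank H E \<phi>"
  "graph_rank V E = p + graph_rank H E"
  "graph_rank F E = graph_rank H E"
proof -
  have HV: "H \<subseteq> V" using F_subset vV by (auto simp: H_def)
  have F_le_H: "submatrix_rank F F N \<le> submatrix_rank H H N" for N
    using finite_H by (intro principal_rank_mono) (auto simp: H_def)
  have "submatrix_rank H H MB = submatrix_rank F F MB"
    "int (submatrix_rank F F MB) = int (submatrix_rank F F MA) - 2 * theta F E"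
    "submatrix_rank F F MA = submatrix_rank H H MA" "theta H E = theta F E"
    using rank_V_MA rank_V_MB tight_submatrix_rank rank_lower_bound[OF F_subset] rank_lower_bound[OF HV]
      F_le_H[of MA] F_le_H[of MB] theta_F_lt_theta_V theta_H_le_theta_F
    by linarith+
  then show "int (gain_rank H E \<phi>) = int (graph_rank H E) - 2 * theta H E"
    "int (gain_rank F E \<phi>) = int (graph_rank F E) - 2 * theta F E"
    "int (gain_rank V E \<phi>) = int p - 2 + int (gain_rank F E \<phi>)"
    "gain_rank F E \<phi> = gain_rank H E \<phi>"
    "graph_rank V E = p + graph_rank H E"
    "graph_rank F E = graph_rank H E"
    using rank_V_MA rank_V_MB p3 by (auto simp: graph_rank_eq_submatrix_rank gain_rank_eq_submatrix_rank)
qed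

end

theorem theorem4p4:
  fixes V :: "'a set" and E :: "'a \<Rightarrow> 'a \<Rightarrow> bool" and \<phi> :: "'a \<Rightarrow> 'a \<Rightarrow> complex"
    and cyc :: "'a list" and v :: 'a
  assumes "simple_graph V E" and "unit_gain E \<phi>"
    and "pendant_cycle V E cyc v"
    and "int (gain_rank V E \<phi>) = int (graph_rank V E) - 2 * theta V E"
  defines "p \<equiv> length cyc"
    and "F \<equiv> V - set cyc"
    and "H \<equiv> (V - set cyc) \<union> {v}"
  shows "(type_A \<phi> cyc \<and> p mod 4 = 2)
    \<and> (int (gain_rank H E \<phi>) = int (graph_rank H E) - 2 * theta H E
       \<and> int (gain_rank F E \<phi>) = int (graph_rank F E) - 2 * theta F E)
    \<and> (int (gain_rank V E \<phi>) = int p - 2 + int (gain_rank F E \<phi>)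
       \<and> gain_rank F E \<phi> = gain_rank H E \<phi>
       \<and> graph_rank V E = p + graph_rank H E
       \<and> graph_rank F E = graph_rank H E)"
proof -
  obtain w u where W: "pendant_cycle_walk V E w p v u" "w ` {..<p} = set cyc"
    and gain: "\<And>\<psi>. cycle_gain \<psi> cyc = (\<Prod>i<p. \<psi> (w i) (w (Suc i mod p)))"
    using pendant_cycle_walk_exists[OF assms(1,3)] unfolding p_def by blast
  interpret T: tight_pendant_cycle_walk V E w p v u \<phi>
    using W(1) assms(2,4) by (simp add: tight_pendant_cycle_walk_def tight_pendant_cycle_walk_axioms_def)
  have "F = T.F" "H = T.H" using W(2) by (auto simp: F_def H_def T.F_def T.H_def)
  moreover have "type_A \<phi> cyc" using T.even_cycle T.type_A_gain gain by (simp add: type_A_def p_def)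
  ultimately show ?thesis using T.p_mod_4 T.rank_identities by simp
qed

end
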